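(* Let $s_1,\dots,s_{d-1}$ be positive integers, set $s_0=s_d=1$, and assume $s_{i-1}s_i\le n_i$ for all $i=1,\dots,d$. Then the set $\mathrm{ttrank}^{-1}(s_1,\dots,s_{d-1})$ of tensors of TT rank $(s_1,\dots,s_{d-1})$ is $G$-invariant, and the orbit $\Pi_{s_1\dots s_{d-1}}=G\cdot T$ of $$T=\sum_{\alpha_1=1}^{s_1}\cdots\sum_{\alpha_{d-1}=1}^{s_{d-1}} e_1^{\alpha_1}\otimes e_2^{\iota_2(\alpha_1,\alpha_2)}\otimes\cdots\otimes e_{d-1}^{\iota_{d-1}(\alpha_{d-2},\alpha_{d-1})}\otimes e_d^{\alpha_{d-1}}$$ is an open dense subset of $\mathrm{ttrank}^{-1}(s_1,\dots,s_{d-1})$ (Euclidean subspace topology; moreover it is Zariski open in the Zariski closure). Furthermore $\Pi_{s_1\dots s_{d-1}}$ consists exactly of the elements of $\mathrm{ttrank}^{-1}(s_1,\dots,s_{d-1})$ whose multilinear rank is the maximal possible value $(s_1,s_1s_2,s_2s_3,\dots,s_{d-2}s_{d-1},s_{d-1})$.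
   Context: Fix integers $d\ge 3$ and $n_1,\dots,n_d\ge 2$. $V=\mathbb{R}^{n_1}\otimes\cdots\otimes\mathbb{R}^{n_d}$, and $G=\mathrm{GL}(n_1)\times\cdots\times\mathrm{GL}(n_d)$ acts on $V$ by $(g_1,\dots,g_d)\cdot(v_1\otimes\cdots\otimes v_d)=(g_1v_1)\otimes\cdots\otimes(g_dv_d)$, extended linearly. $e_i^1,\dots,e_i^{n_i}$ is the standard basis of $\mathbb{R}^{n_i}$. The TT rank of $T\in V$ is $(s_1,\dots,s_{d-1})$ where $s_i$ is the rank of $T$ viewed as a linear map $\mathbb{R}^{n_1}\otimes\cdots\otimes\mathbb{R}^{n_i}\to\mathbb{R}^{n_{i+1}}\otimes\cdots\otimes\mathbb{R}^{n_d}$. The multilinear rank of $T$ is $(t_1,\dots,t_d)$ where $t_i$ is the rank of $T$ viewed as a linear map $\mathbb{R}^{n_i}\to\bigotimes_{j\ne i}\mathbb{R}^{n_j}$. For $2\le i\le d-1$, $\iota_i:[s_{i-1}]\times[s_i]\to[s_{i-1}s_i]$ is the lexicographic bijection with the first argument most significant. *)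

theory Defs
  imports "HOL-Analysis.Analysis" "HOL-Library.Function_Algebras"
begin

text \<open>Modes are numbered 1..d; the i-th index ranges over {..<n i} (0-based values).
  A tensor in V is a real function on multi-indices, zero outside the index box.\<close>

type_synonym tensor = "(nat \<Rightarrow> nat) \<Rightarrow> real"

definition idxs :: "nat \<Rightarrow> (nat \<Rightarrow> nat) \<Rightarrow> (nat \<Rightarrow> nat) set" where
  "idxs d n = (\<Pi>\<^sub>E i\<in>{1..d}. {..<n i})"

definition tensors :: "nat \<Rightarrow> (nat \<Rightarrow> nat) \<Rightarrow> tensor set" where
  "tensors d n = {T. \<forall>j. j \<notin> idxs d n \<longrightarrow> T j = 0}"

definition rowrank :: "('c \<Rightarrow> real) set \<Rightarrow> nat" where
  "rowrank R = vector_space.dim (\<lambda>a f x. a * f x) R"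

definition merge_idx :: "nat \<Rightarrow> (nat \<Rightarrow> nat) \<Rightarrow> (nat \<Rightarrow> nat) \<Rightarrow> (nat \<Rightarrow> nat)" where
  "merge_idx i r c = (\<lambda>k. if k \<le> i then r k else c k)"

text \<open>i-th TT rank: rank of the unfolding R^{n_1..n_i} -> R^{n_{i+1}..n_d}.\<close>
definition tt_rank_i :: "nat \<Rightarrow> (nat \<Rightarrow> nat) \<Rightarrow> tensor \<Rightarrow> nat \<Rightarrow> nat" where
  "tt_rank_i d n T i =
     rowrank ((\<lambda>r. \<lambda>c. T (merge_idx i r c)) ` (\<Pi>\<^sub>E k\<in>{1..i}. {..<n k}))"

definition ttrank_fibre :: "nat \<Rightarrow> (nat \<Rightarrow> nat) \<Rightarrow> (nat \<Rightarrow> nat) \<Rightarrow> tensor set" where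
  "ttrank_fibre d n s = {T \<in> tensors d n. \<forall>i\<in>{1..d-1}. tt_rank_i d n T i = s i}"

text \<open>i-th multilinear rank: rank of the mode-i unfolding R^{n_i} -> (other factors).\<close>
definition ml_rank_i :: "nat \<Rightarrow> (nat \<Rightarrow> nat) \<Rightarrow> tensor \<Rightarrow> nat \<Rightarrow> nat" where
  "ml_rank_i d n T i = rowrank ((\<lambda>a. \<lambda>c. T (c(i := a))) ` {..<n i})"

definition GLn :: "nat \<Rightarrow> (nat \<Rightarrow> nat \<Rightarrow> real) set" where
  "GLn m = {A. \<exists>B. \<forall>r<m. \<forall>c<m.
      (\<Sum>k<m. A r k * B k c) = (if r = c then 1 else 0) \<and>
      (\<Sum>k<m. B r k * A k c) = (if r = c then 1 else 0)}"

definition Grp :: "nat \<Rightarrow> (nat \<Rightarrow> nat) \<Rightarrow> (nat \<Rightarrow> nat \<Rightarrow> nat \<Rightarrow> real) set" where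
  "Grp d n = {g. \<forall>i\<in>{1..d}. g i \<in> GLn (n i)}"

text \<open>Action of (g_1,...,g_d) on V, the linear extension of v_1 x..x v_d |-> g_1 v_1 x..x g_d v_d.\<close>
definition act :: "nat \<Rightarrow> (nat \<Rightarrow> nat) \<Rightarrow> (nat \<Rightarrow> nat \<Rightarrow> nat \<Rightarrow> real) \<Rightarrow> tensor \<Rightarrow> tensor" where
  "act d n g T = (\<lambda>j. if j \<in> idxs d n then
      (\<Sum>k\<in>idxs d n. (\<Prod>i\<in>{1..d}. g i (j i) (k i)) * T k) else 0)"

definition outer :: "nat \<Rightarrow> (nat \<Rightarrow> nat) \<Rightarrow> (nat \<Rightarrow> nat \<Rightarrow> real) \<Rightarrow> tensor" where
  "outer d n v = (\<lambda>j. if j \<in> idxs d n then (\<Prod>i\<in>{1..d}. v i (j i)) else 0)"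

definition ebasis :: "nat \<Rightarrow> nat \<Rightarrow> real" where
  "ebasis a = (\<lambda>x. if x = a then 1 else 0)"

definition iota :: "(nat \<Rightarrow> nat) \<Rightarrow> nat \<Rightarrow> nat \<Rightarrow> nat \<Rightarrow> nat" where
  "iota s i a b = a * s i + b"

text \<open>Index used in mode i for the summation multi-index alpha (alpha_1..alpha_{d-1}).\<close>
definition tt_comp :: "nat \<Rightarrow> (nat \<Rightarrow> nat) \<Rightarrow> (nat \<Rightarrow> nat) \<Rightarrow> nat \<Rightarrow> nat" where
  "tt_comp d s \<alpha> i = (if i = 1 then \<alpha> 1 else if i = d then \<alpha> (d - 1)
                       else iota s i (\<alpha> (i - 1)) (\<alpha> i))"

definition ttT :: "nat \<Rightarrow> (nat \<Rightarrow> nat) \<Rightarrow> (nat \<Rightarrow> nat) \<Rightarrow> tensor" where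
  "ttT d n s = (\<lambda>j. \<Sum>\<alpha>\<in>(\<Pi>\<^sub>E k\<in>{1..d-1}. {..<s k}).
                  outer d n (\<lambda>i. ebasis (tt_comp d s \<alpha> i)) j)"

definition orbit :: "nat \<Rightarrow> (nat \<Rightarrow> nat) \<Rightarrow> tensor \<Rightarrow> tensor set" where
  "orbit d n T = (\<lambda>g. act d n g T) ` Grp d n"

inductive polyfun :: "(tensor \<Rightarrow> real) \<Rightarrow> bool" where
  pconst: "polyfun (\<lambda>T. c)"
| pcoord: "polyfun (\<lambda>T. T j)"
| padd: "polyfun p \<Longrightarrow> polyfun q \<Longrightarrow> polyfun (\<lambda>T. p T + q T)"
| pmult: "polyfun p \<Longrightarrow> polyfun q \<Longrightarrow> polyfun (\<lambda>T. p T * q T)"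

definition zclosed :: "nat \<Rightarrow> (nat \<Rightarrow> nat) \<Rightarrow> tensor set \<Rightarrow> bool" where
  "zclosed d n Z \<longleftrightarrow> (\<exists>P. (\<forall>p\<in>P. polyfun p) \<and> Z = {T \<in> tensors d n. \<forall>p\<in>P. p T = 0})"

definition zclosure :: "nat \<Rightarrow> (nat \<Rightarrow> nat) \<Rightarrow> tensor set \<Rightarrow> tensor set" where
  "zclosure d n A = \<Inter>{Z. zclosed d n Z \<and> A \<subseteq> Z}"

definition zopenin :: "nat \<Rightarrow> (nat \<Rightarrow> nat) \<Rightarrow> tensor set \<Rightarrow> tensor set \<Rightarrow> bool" where
  "zopenin d n Y A \<longleftrightarrow> (\<exists>Z. zclosed d n Z \<and> A = Y - Z)"

end

(*
  Write T0 for the tensor ttT of the statement.  Every tensor X with TT ranks at most s is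
  h . T0 for some tuple h = (h_1, ..., h_d) of not necessarily invertible matrices: spanning
  families of the row spaces of the successive unfoldings of X yield TT cores G_l, and h_l
  holds G_l(beta, -, gamma) in its column iota_l(beta, gamma).  Only these first
  s_{l-1} s_l columns of h_l enter h . T0, and the mode-l unfolding of h . T0 factors
  through them.  Hence h . T0 lies in the orbit of T0 exactly when all multilinear ranks are
  maximal: then the columns are independent and can be completed to invertible matrices.
  Ranks cannot increase under the action, so G preserves the fibre.  Maximal multilinear
  rank means that some minor does not vanish, an open and Zariski open condition, while TT
  ranks at most s means that all minors of size s_i + 1 vanish.  Finally, h_l + t I is
  invertible for all but finitely many t, which gives density.
*)
theory Submission
  imports Defs "Jordan_Normal_Form.Char_Poly" "Jordan_Normal_Form.Determinant"
begin

section \<open>Linear algebra in spaces of real-valued functions\<close>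

lemma sum_fun_apply: "(sum f A) x = (\<Sum>a\<in>A. f a x)"
  by (induction A rule: infinite_finite_induct) auto

interpretation fv: vector_space "\<lambda>a (f::'c\<Rightarrow>real) x. a * f x"
  by unfold_locales (auto simp: fun_eq_iff algebra_simps)

interpretation fvp: vector_space_pair "\<lambda>a (f::'c\<Rightarrow>real) x. a * f x" "\<lambda>a (f::'d\<Rightarrow>real) x. a * f x"
  by unfold_locales

lemma linear_fvI:
  assumes "\<And>x y. L (x + y) = L x + L y" "\<And>c x. L (\<lambda>t. c * x t) = (\<lambda>t. c * L x t)"
  shows "Vector_Spaces.linear (\<lambda>a (f::'c\<Rightarrow>real) x. a * f x) (\<lambda>a (f::'d\<Rightarrow>real) x. a * f x) L"
  unfolding Vector_Spaces.linear_iff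
  using assms fv.vector_space_axioms[where 'c='c] fv.vector_space_axioms[where 'c='d] by auto

lemma fv_span_sumI:
  fixes w :: "'i \<Rightarrow> 'c \<Rightarrow> real"
  assumes "finite I" "\<And>i. i \<in> I \<Longrightarrow> w i \<in> fv.span S"
  shows "(\<lambda>x. \<Sum>i\<in>I. c i * w i x) \<in> fv.span S"
proof -
  have "(\<Sum>i\<in>I. (\<lambda>x. c i * w i x)) \<in> fv.span S"
    using assms by (intro fv.span_sum fv.span_scale) auto
  moreover have "(\<Sum>i\<in>I. (\<lambda>x. c i * w i x)) = (\<lambda>x. \<Sum>i\<in>I. c i * w i x)"
    by (simp add: fun_eq_iff sum_fun_apply)
  ultimately show ?thesis by simp
qed

lemma fv_span_coeffs:
  fixes w :: "nat \<Rightarrow> 'c \<Rightarrow> real"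
  assumes "f \<in> fv.span (w ` {..<k})"
  shows "\<exists>c. \<forall>x. f x = (\<Sum>\<gamma><k. c \<gamma> * w \<gamma> x)"
proof -
  let ?T = "{f. \<exists>c. \<forall>x. f x = (\<Sum>\<gamma><k. c \<gamma> * w \<gamma> x)}"
  have "fv.subspace ?T"
    unfolding fv.subspace_def
  proof (intro conjI ballI allI)
    show "0 \<in> ?T" by (auto intro: exI[of _ "\<lambda>_. 0"])
  next
    fix x y assume "x \<in> ?T" "y \<in> ?T"
    then obtain c1 c2 where "\<forall>t. x t = (\<Sum>\<gamma><k. c1 \<gamma> * w \<gamma> t)" "\<forall>t. y t = (\<Sum>\<gamma><k. c2 \<gamma> * w \<gamma> t)"
      by auto
    then show "x + y \<in> ?T"
      by (auto intro!: exI[of _ "\<lambda>\<gamma>. c1 \<gamma> + c2 \<gamma>"] simp: sum.distrib algebra_simps)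
  next
    fix c x assume "x \<in> ?T"
    then obtain c1 where "\<forall>t. x t = (\<Sum>\<gamma><k. c1 \<gamma> * w \<gamma> t)" by auto
    then show "(\<lambda>t. c * x t) \<in> ?T"
      by (auto intro!: exI[of _ "\<lambda>\<gamma>. c * c1 \<gamma>"] simp: sum_distrib_left algebra_simps)
  qed
  moreover have "w \<gamma> \<in> ?T" if "\<gamma> < k" for \<gamma>
  proof -
    have "w \<gamma> x = (\<Sum>\<gamma>'<k. (if \<gamma>' = \<gamma> then 1 else 0) * w \<gamma>' x)" for x
      using that by (simp add: if_distrib[of "\<lambda>c. c * _"] sum.delta cong: if_cong)
    then show ?thesis by (intro CollectI exI[of _ "\<lambda>\<gamma>'. if \<gamma>' = \<gamma> then 1 else 0"]) blast
  qed
  ultimately have "fv.span (w ` {..<k}) \<subseteq> ?T"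
    by (intro fv.span_minimal) auto
  then show ?thesis using assms by auto
qed

definition span_coeffs :: "(nat \<Rightarrow> 'c \<Rightarrow> real) \<Rightarrow> nat \<Rightarrow> ('c \<Rightarrow> real) \<Rightarrow> nat \<Rightarrow> real" where
  "span_coeffs w k f = (SOME c. \<forall>x. f x = (\<Sum>\<gamma><k. c \<gamma> * w \<gamma> x))"

lemma span_coeffs_expand:
  assumes "f \<in> fv.span (w ` {..<k})"
  shows "f x = (\<Sum>\<gamma><k. span_coeffs w k f \<gamma> * w \<gamma> x)"
proof -
  have "\<forall>x. f x = (\<Sum>\<gamma><k. span_coeffs w k f \<gamma> * w \<gamma> x)"
    unfolding span_coeffs_def by (rule someI_ex[OF fv_span_coeffs[OF assms]])
  then show ?thesis by blast
qed

lemma rowrank_le_if_span_image: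
  fixes L :: "('c\<Rightarrow>real) \<Rightarrow> ('d\<Rightarrow>real)"
  assumes lin: "Vector_Spaces.linear (\<lambda>a (f::'c\<Rightarrow>real) x. a * f x) (\<lambda>a (f::'d\<Rightarrow>real) x. a * f x) L"
    and fin: "finite R" and sub: "R' \<subseteq> fv.span (L ` R)"
  shows "rowrank R' \<le> rowrank R"
proof -
  obtain B where B: "B \<subseteq> R" "fv.independent B" "R \<subseteq> fv.span B" "card B = fv.dim R"
    using fv.basis_exists by blast
  have finB: "finite B" using B fin finite_subset by blast
  have "L ` R \<subseteq> fv.span (L ` B)"
    using B(3) fvp.linear_span_image[OF lin] by blast
  then have "fv.span (L ` R) \<subseteq> fv.span (L ` B)"
    by (metis fv.span_minimal fv.subspace_span)
  with sub have "fv.dim R' \<le> card (L ` B)"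
    using fv.dim_le_card finB by blast
  also have "\<dots> \<le> card B" using card_image_le finB by blast
  finally show ?thesis using B by (simp add: rowrank_def)
qed

lemma spanning_family_exists:
  fixes R :: "('c \<Rightarrow> real) set"
  assumes "finite R" "rowrank R \<le> k"
  shows "\<exists>w. (\<forall>\<gamma>. w \<gamma> \<in> fv.span R) \<and> R \<subseteq> fv.span (w ` {..<k})"
proof -
  obtain B where B: "B \<subseteq> R" "fv.independent B" "R \<subseteq> fv.span B" "card B = fv.dim R"
    using fv.basis_exists by blast
  have finB: "finite B" using B assms finite_subset by blast
  obtain e where e: "bij_betw e {..<card B} B"
    using ex_bij_betw_nat_finite[OF finB] by (auto simp: atLeast0LessThan)
  define w where "w = (\<lambda>\<gamma>. if \<gamma> < card B then e \<gamma> else 0)"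
  have "w \<gamma> \<in> fv.span R" for \<gamma>
    using bij_betw_apply[OF e] B(1) by (auto simp: w_def intro: fv.span_base fv.span_zero)
  moreover have "B \<subseteq> w ` {..<k}"
  proof
    fix b assume "b \<in> B"
    then obtain \<gamma> where "\<gamma> < card B" "e \<gamma> = b" using e unfolding bij_betw_def by force
    then show "b \<in> w ` {..<k}"
      using B assms by (auto simp: w_def rowrank_def intro!: image_eqI[of _ _ \<gamma>])
  qed
  then have "R \<subseteq> fv.span (w ` {..<k})" using B fv.span_mono by blast
  ultimately show ?thesis by blast
qed

definition indep_family :: "(nat \<Rightarrow> 'c \<Rightarrow> real) \<Rightarrow> nat \<Rightarrow> bool" where
  "indep_family v k \<longleftrightarrow> (\<forall>a. (\<forall>c. (\<Sum>\<mu><k. a \<mu> * v \<mu> c) = 0) \<longrightarrow> (\<forall>\<mu><k. a \<mu> = 0))"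

lemma indep_family_iff: "indep_family v k \<longleftrightarrow> inj_on v {..<k} \<and> fv.independent (v ` {..<k})"
proof
  assume H: "indep_family v k"
  show "inj_on v {..<k} \<and> fv.independent (v ` {..<k})"
  proof
    show inj: "inj_on v {..<k}"
    proof (rule inj_onI, rule ccontr)
      fix i j assume ij: "i \<in> {..<k}" "j \<in> {..<k}" "v i = v j" "i \<noteq> j"
      define a where "a = (\<lambda>\<mu>. if \<mu> = i then (1::real) else if \<mu> = j then -1 else 0)"
      have "(\<Sum>\<mu><k. a \<mu> * v \<mu> c) = (\<Sum>\<mu>\<in>{i,j}. a \<mu> * v \<mu> c)" for c
        by (rule sum.mono_neutral_right) (use ij in \<open>auto simp: a_def\<close>)
      then have "\<forall>c. (\<Sum>\<mu><k. a \<mu> * v \<mu> c) = 0"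
        using ij by (simp add: a_def)
      then have "a i = 0" using H ij unfolding indep_family_def by blast
      then show False by (simp add: a_def)
    qed
    show "fv.independent (v ` {..<k})"
    proof (rule fv.independent_if_scalars_zero)
      fix f x assume s: "(\<Sum>x\<in>v ` {..<k}. (\<lambda>t. f x * x t)) = 0" and x: "x \<in> v ` {..<k}"
      have "\<forall>c. (\<Sum>\<mu><k. f (v \<mu>) * v \<mu> c) = 0"
        using s by (simp add: sum.reindex[OF inj] fun_eq_iff sum_fun_apply)
      then show "f x = 0" using H x by (auto simp: indep_family_def)
    qed simp
  qed
next
  assume H: "inj_on v {..<k} \<and> fv.independent (v ` {..<k})"
  show "indep_family v k"
    unfolding indep_family_def
  proof (intro allI impI)
    fix a \<mu> assume z: "\<forall>c. (\<Sum>\<mu><k. a \<mu> * v \<mu> c) = 0" and \<mu>: "\<mu> < k"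
    let ?u = "\<lambda>f. a (the_inv_into {..<k} v f)"
    have inv: "the_inv_into {..<k} v (v b) = b" if "b < k" for b
      using the_inv_into_f_f[of v "{..<k}"] H that by simp
    have "(\<Sum>f\<in>v ` {..<k}. (\<lambda>t. ?u f * f t)) = (\<Sum>b<k. (\<lambda>t. a b * v b t))"
      using H by (simp add: sum.reindex inv)
    also have "\<dots> = 0" using z by (simp add: fun_eq_iff sum_fun_apply)
    finally have "?u (v \<mu>) = 0"
      using H \<mu> fv.dependent_finite[of "v ` {..<k}"] by auto
    then show "a \<mu> = 0" using inv \<mu> by simp
  qed
qed

lemma indep_family_le_rowrank:
  assumes "indep_family v k" "v ` {..<k} \<subseteq> R" "finite R"
  shows "k \<le> rowrank R"
proof -
  obtain A where A: "A \<subseteq> R" "fv.independent A" "R \<subseteq> fv.span A" "card A = fv.dim R"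
    using fv.basis_exists by blast
  have v: "inj_on v {..<k}" "fv.independent (v ` {..<k})"
    using assms(1) indep_family_iff by blast+
  have "finite A" using A assms finite_subset by blast
  then have "card (v ` {..<k}) \<le> card A"
    using fv.independent_span_bound[of A "v ` {..<k}"] A(3) assms(2) v(2) by blast
  then show ?thesis
    using A(4) card_image[OF v(1)] by (simp add: rowrank_def)
qed

lemma indep_family_cong:
  assumes "\<And>\<mu>. \<mu> < k \<Longrightarrow> v \<mu> = w \<mu>"
  shows "indep_family v k \<longleftrightarrow> indep_family w k"
proof -
  have "(\<Sum>\<mu><k. a \<mu> * v \<mu> c) = (\<Sum>\<mu><k. a \<mu> * w \<mu> c)" for a c
    using assms by (intro sum.cong) auto
  then show ?thesis by (simp add: indep_family_def)
qed

lemma indep_family_ebasis: "indep_family ebasis m"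
  unfolding indep_family_def
proof (intro allI impI)
  fix a \<mu> assume z: "\<forall>c. (\<Sum>\<mu><m. a \<mu> * ebasis \<mu> c) = 0" and \<mu>: "\<mu> < m"
  have "(\<Sum>\<mu>'<m. a \<mu>' * ebasis \<mu>' \<mu>) = a \<mu>"
    using \<mu> by (simp add: ebasis_def if_distrib[of "\<lambda>c. _ * c"] sum.delta' cong: if_cong)
  then show "a \<mu> = 0" using z by simp
qed

lemma trunc_rows_sub_span:
  "(\<lambda>a b. if b < k then M a b else 0) ` A \<subseteq> fv.span (ebasis ` {..<k})"
proof
  fix f assume "f \<in> (\<lambda>a b. if b < k then M a b else 0) ` A"
  then obtain a where f: "f = (\<lambda>b. if b < k then M a b else 0)" by auto
  have "f = (\<lambda>b. \<Sum>b'<k. M a b' * ebasis b' b)"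
    by (auto simp: f fun_eq_iff ebasis_def if_distrib[of "\<lambda>c. _ * c"] sum.delta' cong: if_cong)
  moreover have "(\<lambda>b. \<Sum>b'<k. M a b' * ebasis b' b) \<in> fv.span (ebasis ` {..<k})"
    by (rule fv_span_sumI) (auto intro: fv.span_base)
  ultimately show "f \<in> fv.span (ebasis ` {..<k})" by simp
qed

lemma rowrank_trunc_rows_le: "rowrank ((\<lambda>a b. if b < k then M a b else 0) ` A) \<le> k"
proof -
  have "rowrank ((\<lambda>a b. if b < k then M a b else 0) ` A) \<le> card (ebasis ` {..<k})"
    unfolding rowrank_def by (rule fv.dim_le_card[OF trunc_rows_sub_span]) simp
  also have "\<dots> \<le> k" using card_image_le[of "{..<k}" ebasis] by simp
  finally show ?thesis .
qed

section \<open>Matrices and minors\<close>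

definition inj_mat :: "(nat \<Rightarrow> nat \<Rightarrow> real) \<Rightarrow> nat \<Rightarrow> nat \<Rightarrow> bool" where
  "inj_mat M m k \<longleftrightarrow> (\<forall>x. (\<forall>i<m. (\<Sum>j<k. M i j * x j) = 0) \<longrightarrow> (\<forall>j<k. x j = 0))"

lemma indep_family_cols_iff: "indep_family (\<lambda>j i. if i < m then M i j else 0) k \<longleftrightarrow> inj_mat M m k"
proof -
  have "(\<forall>c. (\<Sum>\<mu><k. x \<mu> * (if c < m then M c \<mu> else 0)) = 0) \<longleftrightarrow> (\<forall>i<m. (\<Sum>j<k. M i j * x j) = 0)" for x
  proof -
    have "(\<Sum>\<mu><k. x \<mu> * (if c < m then M c \<mu> else 0)) = (if c < m then \<Sum>j<k. M c j * x j else 0)" for c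
      by (cases "c < m") (simp_all add: mult.commute)
    then show ?thesis by auto
  qed
  then show ?thesis unfolding indep_family_def inj_mat_def by simp
qed

lemma inj_minor_indep_family: "inj_mat (\<lambda>\<nu> \<mu>. v \<mu> (p \<nu>)) k k \<Longrightarrow> indep_family v k"
  unfolding inj_mat_def indep_family_def by (auto simp: mult.commute)

lemma inj_minor_le_rowrank:
  assumes "inj_mat (\<lambda>\<nu> \<mu>. v \<mu> (p \<nu>)) k k" "v ` {..<k} \<subseteq> R" "finite R"
  shows "k \<le> rowrank R"
  using indep_family_le_rowrank[OF inj_minor_indep_family] assms by blast

lemma rowrank_ge_if_identity_minor:
  assumes "\<And>\<mu> \<nu>. \<mu> < k \<Longrightarrow> \<nu> < k \<Longrightarrow> v \<mu> (p \<nu>) = (if \<mu> = \<nu> then 1 else 0)"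
    and "v ` {..<k} \<subseteq> R" "finite R"
  shows "k \<le> rowrank R"
proof (rule inj_minor_le_rowrank[OF _ assms(2,3)])
  have "(\<Sum>\<mu><k. v \<mu> (p \<nu>) * x \<mu>) = x \<nu>" if "\<nu> < k" for x \<nu>
    using that assms(1) by (simp add: if_distrib[of "\<lambda>c. c * _"] sum.delta' cong: if_cong)
  then show "inj_mat (\<lambda>\<nu> \<mu>. v \<mu> (p \<nu>)) k k"
    unfolding inj_mat_def by simp
qed

lemma inj_mat_if_rowrank_trunc_rows:
  assumes rk: "k \<le> rowrank ((\<lambda>a b. if b < k then M a b else 0) ` {..<m})"
  shows "inj_mat M m k"
  unfolding inj_mat_def
proof (intro allI impI)
  let ?R = "(\<lambda>a b. if b < k then M a b else 0) ` {..<m}"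
  fix x b assume H: "\<forall>a<m. (\<Sum>b<k. M a b * x b) = 0" and b: "b < k"
  obtain B where B: "B \<subseteq> ?R" "fv.independent B" "?R \<subseteq> fv.span B" "card B = fv.dim ?R"
    using fv.basis_exists by blast
  have eb: "ebasis b \<in> fv.span ?R"
  proof (rule ccontr)
    assume "ebasis b \<notin> fv.span ?R"
    then have nin: "ebasis b \<notin> fv.span B" using B(1) fv.span_mono by blast
    have "ebasis b \<in> fv.span (ebasis ` {..<k})" using b by (intro fv.span_base) simp
    moreover have "B \<subseteq> fv.span (ebasis ` {..<k})"
      by (rule subset_trans[OF B(1) trunc_rows_sub_span])
    ultimately have "insert (ebasis b) B \<subseteq> fv.span (ebasis ` {..<k})" by blast
    then have "finite (insert (ebasis b) B) \<and> card (insert (ebasis b) B) \<le> card (ebasis ` {..<k})"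
      by (intro fv.independent_span_bound[OF _ fv.independent_insertI[OF nin B(2)]]) simp_all
    moreover have "ebasis b \<notin> B" using nin fv.span_base by blast
    moreover have "card (ebasis ` {..<k}) \<le> k" using card_image_le[of "{..<k}" ebasis] by simp
    ultimately show False using B(4) rk by (auto simp: rowrank_def)
  qed
  have "fv.span ?R \<subseteq> {v. (\<Sum>b'<k. v b' * x b') = 0}"
  proof (rule fv.span_minimal)
    show "?R \<subseteq> {v. (\<Sum>b'<k. v b' * x b') = 0}"
    proof
      fix v assume "v \<in> ?R"
      then obtain a where a: "a < m" "v = (\<lambda>b. if b < k then M a b else 0)" by auto
      have "(\<Sum>b'<k. v b' * x b') = (\<Sum>b'<k. M a b' * x b')"
        unfolding a(2) by (rule sum.cong) auto
      then show "v \<in> {v. (\<Sum>b'<k. v b' * x b') = 0}" using H a(1) by simp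
    qed
    have "(\<Sum>b'<k. c * v b' * x b') = c * (\<Sum>b'<k. v b' * x b')" for c v
      by (simp add: sum_distrib_left mult.assoc)
    then show "fv.subspace {v. (\<Sum>b'<k. v b' * x b') = 0}"
      unfolding fv.subspace_def by (simp add: sum.distrib distrib_right)
  qed
  with eb have "(\<Sum>b'<k. ebasis b b' * x b') = 0" by blast
  then show "x b = 0"
    using b by (simp add: ebasis_def if_distrib[of "\<lambda>c. c * _"] sum.delta cong: if_cong)
qed

definition sq_mat :: "(nat \<Rightarrow> nat \<Rightarrow> real) \<Rightarrow> nat \<Rightarrow> real Matrix.mat" where
  "sq_mat M k = Matrix.mat k k (\<lambda>(i, j). M i j)"

lemma sq_mat_carrier: "sq_mat M k \<in> carrier_mat k k"
  by (simp add: sq_mat_def)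

lemma sq_mat_dims [simp]: "dim_row (sq_mat M k) = k" "dim_col (sq_mat M k) = k"
  by (simp_all add: sq_mat_def)

lemma sq_mat_mult_vec: "dim_vec v = k \<Longrightarrow> i < k \<Longrightarrow> (sq_mat M k *\<^sub>v v) $ i = (\<Sum>j<k. M i j * v $ j)"
  by (simp add: sq_mat_def scalar_prod_def Matrix.row_def atLeast0LessThan)

lemma sq_mat_cong: "(\<And>i j. i < k \<Longrightarrow> j < k \<Longrightarrow> M i j = M' i j) \<Longrightarrow> sq_mat M k = sq_mat M' k"
  by (auto simp: sq_mat_def intro!: eq_matI)

lemma det_sq_mat_nonzero_iff: "Determinant.det (sq_mat M k) \<noteq> 0 \<longleftrightarrow> inj_mat M k k"
  unfolding inj_mat_def
proof (intro iffI allI impI)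
  fix x j assume det: "Determinant.det (sq_mat M k) \<noteq> 0" and H: "\<forall>i<k. (\<Sum>j<k. M i j * x j) = 0"
    and j: "j < k"
  have "sq_mat M k *\<^sub>v Matrix.vec k x = 0\<^sub>v k"
  proof (rule eq_vecI)
    fix i assume "i < dim_vec (0\<^sub>v k)"
    then show "(sq_mat M k *\<^sub>v Matrix.vec k x) $ i = 0\<^sub>v k $ i"
      using sq_mat_mult_vec[of "Matrix.vec k x" k i M] H by simp
  qed simp
  then have "Matrix.vec k x = 0\<^sub>v k"
    using det det_0_iff_vec_prod_zero[OF sq_mat_carrier[of M k]] vec_carrier by blast
  then show "x j = 0" using j by (metis index_vec index_zero_vec(1))
next
  assume H: "\<forall>x. (\<forall>i<k. (\<Sum>j<k. M i j * x j) = 0) \<longrightarrow> (\<forall>j<k. x j = 0)"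
  show "Determinant.det (sq_mat M k) \<noteq> 0"
  proof
    assume "Determinant.det (sq_mat M k) = 0"
    then obtain v where v: "v \<in> carrier_vec k" "v \<noteq> 0\<^sub>v k" "sq_mat M k *\<^sub>v v = 0\<^sub>v k"
      using det_0_iff_vec_prod_zero[OF sq_mat_carrier[of M k]] by auto
    have dv: "dim_vec v = k" using v(1) by simp
    have "(\<Sum>j<k. M i j * v $ j) = 0" if "i < k" for i
      using v(3) sq_mat_mult_vec[OF dv that] that by (metis index_zero_vec(1))
    then have "\<forall>j<k. v $ j = 0" using H by blast
    then have "v = 0\<^sub>v k" by (intro eq_vecI) (auto simp: dv)
    then show False using v(2) by simp
  qed
qed

lemma inj_mat_GLn:
  assumes "inj_mat M k k"
  shows "M \<in> GLn k"
proof -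
  have "sq_mat M k \<in> Units (ring_mat TYPE(real) k ())"
    using assms by (intro det_non_zero_imp_unit sq_mat_carrier) (simp add: det_sq_mat_nonzero_iff)
  then obtain B where B: "B \<in> carrier_mat k k" "B * sq_mat M k = 1\<^sub>m k" "sq_mat M k * B = 1\<^sub>m k"
    by (auto simp: Units_def ring_mat_def)
  have "(sq_mat M k * B) $$ (r, c) = (\<Sum>l<k. M r l * B $$ (l, c))"
    and "(B * sq_mat M k) $$ (r, c) = (\<Sum>l<k. B $$ (r, l) * M l c)" if "r < k" "c < k" for r c
    using that B(1) by (simp_all add: sq_mat_def scalar_prod_def Matrix.row_def Matrix.col_def atLeast0LessThan)
  then show ?thesis
    unfolding GLn_def using B by (intro CollectI exI[of _ "\<lambda>i j. B $$ (i, j)"]) auto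
qed

lemma inj_mat_solvable:
  assumes "inj_mat M k k"
  shows "\<exists>x. \<forall>i<k. (\<Sum>j<k. M i j * x j) = y i"
proof -
  obtain B where B: "\<forall>r<k. \<forall>c<k. (\<Sum>l<k. M r l * B l c) = (if r = c then 1 else 0)"
    using inj_mat_GLn[OF assms] unfolding GLn_def by blast
  define x where "x = (\<lambda>j. \<Sum>l<k. B j l * y l)"
  have "(\<Sum>j<k. M i j * x j) = y i" if i: "i < k" for i
  proof -
    have "(\<Sum>j<k. M i j * x j) = (\<Sum>l<k. (\<Sum>j<k. M i j * B j l) * y l)"
      unfolding x_def by (simp add: sum_distrib_left sum_distrib_right mult.assoc) (rule sum.swap)
    also have "\<dots> = (\<Sum>l<k. if l = i then y l else 0)"
      by (rule sum.cong) (use B i in auto)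
    finally show ?thesis using i by (simp add: sum.delta')
  qed
  then show ?thesis by blast
qed

lemma finite_singular_shifts:
  "finite {t. \<not> inj_mat (\<lambda>i j. M i j + t * (if i = j then 1 else 0)) k k}"
proof -
  let ?p = "char_poly (sq_mat M k)"
  have "{t. \<not> inj_mat (\<lambda>i j. M i j + t * (if i = j then 1 else 0)) k k} \<subseteq> uminus ` {x. poly ?p x = 0}"
  proof
    fix t assume "t \<in> {t. \<not> inj_mat (\<lambda>i j. M i j + t * (if i = j then 1 else 0)) k k}"
    then obtain x j0 where x: "\<forall>i<k. (\<Sum>j<k. (M i j + t * (if i = j then 1 else 0)) * x j) = 0"
      "j0 < k" "x j0 \<noteq> 0"
      unfolding inj_mat_def by auto
    have "(\<Sum>j<k. M i j * x j) = - t * x i" if i: "i < k" for i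
    proof -
      have "(\<Sum>j<k. (M i j + t * (if i = j then 1 else 0)) * x j) =
          (\<Sum>j<k. M i j * x j) + (\<Sum>j<k. if j = i then t * x j else 0)"
        by (subst sum.distrib[symmetric], rule sum.cong) (auto simp: algebra_simps)
      also have "\<dots> = (\<Sum>j<k. M i j * x j) + t * x i" using i by (simp add: sum.delta')
      finally show ?thesis using x(1) i by simp
    qed
    then have "sq_mat M k *\<^sub>v Matrix.vec k x = (- t) \<cdot>\<^sub>v Matrix.vec k x"
      by (intro eq_vecI) (simp_all add: sq_mat_mult_vec del: index_mult_mat_vec)
    moreover have "Matrix.vec k x \<noteq> 0\<^sub>v k"
      using x(2,3) by (auto simp: Matrix.vec_eq_iff)
    ultimately have "eigenvalue (sq_mat M k) (- t)"
      unfolding eigenvalue_def eigenvector_def by (auto simp: sq_mat_def intro!: exI[of _ "Matrix.vec k x"])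
    then have "poly ?p (- t) = 0" using eigenvalue_root_char_poly[OF sq_mat_carrier] by blast
    then show "t \<in> uminus ` {x. poly ?p x = 0}" by (auto intro!: image_eqI[of _ _ "- t"])
  qed
  moreover have "?p \<noteq> 0" using degree_monic_char_poly[OF sq_mat_carrier[of M k]] by auto
  then have "finite (uminus ` {x. poly ?p x = 0})" using poly_roots_finite by blast
  ultimately show ?thesis using finite_subset by blast
qed

lemma indep_family_mono:
  assumes "indep_family v k" "k' \<le> k"
  shows "indep_family v k'"
proof -
  have sub: "v ` {..<k'} \<subseteq> v ` {..<k}" "{..<k'} \<subseteq> {..<k}" using assms(2) by auto
  show ?thesis
    using assms(1) fv.independent_mono[OF _ sub(1)] inj_on_subset[OF _ sub(2)]
    unfolding indep_family_iff by blast
qed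

lemma inj_minor_extend:
  assumes indep: "indep_family v (Suc k)" and p: "inj_mat (\<lambda>\<nu> \<mu>. v \<mu> (p \<nu>)) k k"
  shows "\<exists>c0. inj_mat (\<lambda>\<nu> \<mu>. v \<mu> ((p(k := c0)) \<nu>)) (Suc k) (Suc k)"
proof -
  obtain u where u: "\<forall>i<k. (\<Sum>j<k. v j (p i) * u j) = v k (p i)"
    using inj_mat_solvable[OF p, of "\<lambda>i. v k (p i)"] by blast
  \<comment> \<open>\<open>w\<close> is \<open>v k\<close> minus its interpolant through the old points; a new point is one where
    \<open>w\<close> does not vanish.\<close>
  define w where "w = (\<lambda>c. v k c - (\<Sum>\<mu><k. u \<mu> * v \<mu> c))"
  have wp: "w (p \<nu>) = 0" if "\<nu> < k" for \<nu>
    using u that by (simp add: w_def mult.commute)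
  have "\<exists>c0. w c0 \<noteq> 0"
  proof (rule ccontr)
    assume "\<nexists>c0. w c0 \<noteq> 0"
    then have "\<forall>c. (\<Sum>\<mu><Suc k. (if \<mu> < k then - u \<mu> else 1) * v \<mu> c) = 0"
      by (simp add: w_def sum_negf)
    then show False
      using indep[unfolded indep_family_def, rule_format, of "\<lambda>\<mu>. if \<mu> < k then - u \<mu> else 1" k]
      by simp
  qed
  then obtain c0 where c0: "w c0 \<noteq> 0" by blast
  have decomp: "(\<Sum>j<Suc k. v j c * x j) = (\<Sum>j<k. v j c * (x j + x k * u j)) + x k * w c" for c x
    by (simp add: w_def algebra_simps sum.distrib sum_distrib_left)
  show ?thesis
    unfolding inj_mat_def
  proof (intro exI[of _ c0] allI impI)
    fix x j assume H: "\<forall>i<Suc k. (\<Sum>j<Suc k. v j ((p(k := c0)) i) * x j) = 0" and j: "j < Suc k"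
    have "(\<Sum>j<k. v j (p i) * (x j + x k * u j)) = 0" if i: "i < k" for i
    proof -
      have "(\<Sum>j<Suc k. v j (p i) * x j) = 0" using H[rule_format, of i] i by simp
      then show ?thesis using decomp[of "p i" x] wp[OF i] by simp
    qed
    then have z: "\<forall>j<k. x j + x k * u j = 0"
      using p[unfolded inj_mat_def, rule_format, of "\<lambda>j. x j + x k * u j"] by blast
    have "(\<Sum>j<Suc k. v j c0 * x j) = 0" using H[rule_format, of k] by simp
    then have "x k * w c0 = 0"
      using decomp[of c0 x] z by simp
    then have "x k = 0" using c0 by simp
    then show "x j = 0" using z j less_Suc_eq by auto
  qed
qed

lemma inj_minor_exists:
  assumes "indep_family v k"
  shows "\<exists>p. inj_mat (\<lambda>\<nu> \<mu>. v \<mu> (p \<nu>)) k k"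
  using assms
proof (induction k)
  case 0
  then show ?case by (simp add: inj_mat_def)
next
  case (Suc k)
  have "indep_family v k" using indep_family_mono[OF Suc.prems, of k] by simp
  then obtain p where "inj_mat (\<lambda>\<nu> \<mu>. v \<mu> (p \<nu>)) k k" using Suc.IH by blast
  then show ?case using inj_minor_extend[OF Suc.prems] by blast
qed

lemma rowrank_ge_iff_minor:
  fixes f :: "'a \<Rightarrow> 'c \<Rightarrow> real"
  assumes A: "finite A"
  shows "k \<le> rowrank (f ` A) \<longleftrightarrow>
    (\<exists>r c. (\<forall>\<mu><k. r \<mu> \<in> A) \<and> Determinant.det (sq_mat (\<lambda>\<nu> \<mu>. f (r \<mu>) (c \<nu>)) k) \<noteq> 0)"
proof
  assume k: "k \<le> rowrank (f ` A)"
  obtain B where B: "B \<subseteq> f ` A" "fv.independent B" "f ` A \<subseteq> fv.span B" "card B = fv.dim (f ` A)"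
    using fv.basis_exists by blast
  have "k \<le> card B" using k B(4) by (simp add: rowrank_def)
  then obtain B' where B': "B' \<subseteq> B" "card B' = k"
    using obtain_subset_with_card_n by metis
  have "finite B'"
    by (rule finite_subset[OF _ finite_imageI[OF A]]) (use B'(1) B(1) in blast)
  then obtain e where e: "bij_betw e {..<k} B'"
    using ex_bij_betw_nat_finite[of B'] B'(2) by (auto simp: atLeast0LessThan)
  have "indep_family e k"
    unfolding indep_family_iff using e fv.independent_mono[OF B(2) B'(1)] by (simp add: bij_betw_def)
  then obtain c where c: "inj_mat (\<lambda>\<nu> \<mu>. e \<mu> (c \<nu>)) k k"
    using inj_minor_exists by blast
  define r where "r = (\<lambda>\<mu>. inv_into A f (e \<mu>))"
  have "e \<mu> \<in> f ` A" if "\<mu> < k" for \<mu>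
    using e B'(1) B(1) that by (auto simp: bij_betw_def)
  then have r: "r \<mu> \<in> A" "f (r \<mu>) = e \<mu>" if "\<mu> < k" for \<mu>
    using that by (simp_all add: r_def inv_into_into f_inv_into_f)
  have "sq_mat (\<lambda>\<nu> \<mu>. f (r \<mu>) (c \<nu>)) k = sq_mat (\<lambda>\<nu> \<mu>. e \<mu> (c \<nu>)) k"
    by (rule sq_mat_cong) (simp add: r)
  then have "Determinant.det (sq_mat (\<lambda>\<nu> \<mu>. f (r \<mu>) (c \<nu>)) k) \<noteq> 0"
    using c by (simp add: det_sq_mat_nonzero_iff)
  then show "\<exists>r c. (\<forall>\<mu><k. r \<mu> \<in> A) \<and> Determinant.det (sq_mat (\<lambda>\<nu> \<mu>. f (r \<mu>) (c \<nu>)) k) \<noteq> 0"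
    using r(1) by blast
next
  assume "\<exists>r c. (\<forall>\<mu><k. r \<mu> \<in> A) \<and> Determinant.det (sq_mat (\<lambda>\<nu> \<mu>. f (r \<mu>) (c \<nu>)) k) \<noteq> 0"
  then obtain r c where "\<forall>\<mu><k. r \<mu> \<in> A" "inj_mat (\<lambda>\<nu> \<mu>. f (r \<mu>) (c \<nu>)) k k"
    using det_sq_mat_nonzero_iff by blast
  then show "k \<le> rowrank (f ` A)"
    using inj_minor_le_rowrank[of "\<lambda>\<mu>. f (r \<mu>)" c k "f ` A"] A by auto
qed

lemma indep_family_extend_ebasis:
  assumes v: "indep_family v k" and km: "k \<le> m" and sub: "v ` {..<k} \<subseteq> fv.span (ebasis ` {..<m})"
  shows "\<exists>w. indep_family w m \<and> (\<forall>b<k. w b = v b) \<and> w ` {..<m} \<subseteq> v ` {..<k} \<union> ebasis ` {..<m}"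
proof -
  define S where "S = v ` {..<k}"
  define E where "E = ebasis ` {..<m}"
  have S: "inj_on v {..<k}" "fv.independent S"
    using v unfolding S_def indep_family_iff by blast+
  have E: "inj_on ebasis {..<m}" "fv.independent E"
    using indep_family_ebasis[of m] unfolding E_def indep_family_iff by blast+
  have finE: "finite E" and cardE: "card E = m"
    using E(1) by (simp_all add: E_def card_image)
  obtain B where B: "S \<subseteq> B" "B \<subseteq> S \<union> E" "fv.independent B" "S \<union> E \<subseteq> fv.span B"
    using fv.maximal_independent_subset_extend[of S "S \<union> E"] S(2) by auto
  have "B \<subseteq> fv.span E" using B(2) sub fv.span_superset unfolding S_def E_def by blast
  then have finB: "finite B" and "card B \<le> m"
    using fv.independent_span_bound[OF finE B(3)] cardE by auto
  moreover have "m \<le> card B"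
    using fv.independent_span_bound[OF finB E(2)] B(4) cardE by auto
  ultimately have cardB: "card B = m" by simp
  have "card (B - S) = m - k"
    using cardB card_image[OF S(1)] B(1) finB by (simp add: S_def card_Diff_subset finite_subset)
  then obtain e where e: "bij_betw e {..<m - k} (B - S)"
    using ex_bij_betw_nat_finite[of "B - S"] finB by (auto simp: atLeast0LessThan)
  define w where "w = (\<lambda>b. if b < k then v b else e (b - k))"
  have "w ` {..<m} \<subseteq> B"
    using B(1) bij_betw_apply[OF e] by (auto simp: w_def S_def)
  moreover have "B \<subseteq> w ` {..<m}"
  proof
    fix f assume f: "f \<in> B"
    show "f \<in> w ` {..<m}"
    proof (cases "f \<in> S")
      case True
      then obtain b where "b < k" "f = v b" by (auto simp: S_def)
      then show ?thesis using km by (auto simp: w_def intro!: image_eqI[of _ _ b])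
    next
      case False
      then obtain t where "t < m - k" "f = e t"
        using f e by (auto simp: bij_betw_def)
      then show ?thesis by (auto simp: w_def intro!: image_eqI[of _ _ "t + k"])
    qed
  qed
  ultimately have wB: "w ` {..<m} = B" by blast
  then have "inj_on w {..<m}"
    using eq_card_imp_inj_on[of "{..<m}" w] cardB by simp
  then have "indep_family w m"
    using wB B(3) by (simp add: indep_family_iff)
  moreover have "w ` {..<m} \<subseteq> v ` {..<k} \<union> ebasis ` {..<m}"
    using wB B(2) by (simp add: S_def E_def)
  moreover have "\<forall>b<k. w b = v b" by (simp add: w_def)
  ultimately show ?thesis by blast
qed

lemma extend_to_GLn:
  assumes km: "k \<le> m" and M: "inj_mat M m k"
  shows "\<exists>g\<in>GLn m. \<forall>a<m. \<forall>b<k. g a b = M a b"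
proof -
  define col where "col = (\<lambda>b a. if a < m then M a b else (0::real))"
  have "indep_family col k" by (simp add: col_def indep_family_cols_iff M)
  moreover have "col ` {..<k} \<subseteq> fv.span (ebasis ` {..<m})"
    using trunc_rows_sub_span[of m "\<lambda>b a. M a b" "{..<k}"] by (simp add: col_def)
  ultimately obtain w where w: "indep_family w m" "\<forall>b<k. w b = col b"
    "w ` {..<m} \<subseteq> col ` {..<k} \<union> ebasis ` {..<m}"
    using indep_family_extend_ebasis km by blast
  have supp: "w b = (\<lambda>a. if a < m then w b a else 0)" if "b < m" for b
  proof -
    have "w b \<in> col ` {..<k} \<union> ebasis ` {..<m}" using that w(3) by blast
    then show ?thesis by (auto simp: col_def ebasis_def)
  qed
  have "indep_family (\<lambda>b a. if a < m then w b a else 0) m"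
    using indep_family_cong[of m w "\<lambda>b a. if a < m then w b a else 0", OF supp] w(1) by blast
  then have GL: "(\<lambda>a b. w b a) \<in> GLn m"
    using inj_mat_GLn indep_family_cols_iff[of m "\<lambda>a b. w b a" m] by simp
  show ?thesis
  proof (rule bexI[OF _ GL])
    show "\<forall>a<m. \<forall>b<k. w b a = M a b" using w(2) by (simp add: col_def)
  qed
qed

section \<open>Rank conditions are open and Zariski closed\<close>

lemma det_sq_mat_expand:
  "Determinant.det (sq_mat M k) = (\<Sum>p | p permutes {0..<k}. of_int (sign p) * (\<Prod>i = 0..<k. M i (p i)))"
proof -
  have "Determinant.det (sq_mat M k) =
      (\<Sum>p | p permutes {0..<k}. of_int (sign p) * (\<Prod>i = 0..<k. sq_mat M k $$ (i, p i)))"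
    by (simp add: Determinant.det_def)
  also have "\<dots> = (\<Sum>p | p permutes {0..<k}. of_int (sign p) * (\<Prod>i = 0..<k. M i (p i)))"
    by (intro sum.cong prod.cong refl arg_cong2[where f = "(*)"])
      (simp add: sq_mat_def permutes_in_image)
  finally show ?thesis .
qed

lemma continuous_on_det_sq_mat:
  fixes M :: "'a::topological_space \<Rightarrow> nat \<Rightarrow> nat \<Rightarrow> real"
  assumes "\<And>i j. continuous_on UNIV (\<lambda>T. M T i j)"
  shows "continuous_on UNIV (\<lambda>T. Determinant.det (sq_mat (M T) k))"
  unfolding det_sq_mat_expand by (intro continuous_intros assms)

lemma open_rowrank_ge:
  fixes \<phi> :: "'a \<Rightarrow> 'c \<Rightarrow> 'b"
  assumes "finite A"
  shows "open {T :: 'b \<Rightarrow> real. k \<le> rowrank ((\<lambda>a c. T (\<phi> a c)) ` A)}"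
proof -
  have "{T :: 'b \<Rightarrow> real. k \<le> rowrank ((\<lambda>a c. T (\<phi> a c)) ` A)} =
      (\<Union>(r, c) \<in> {(r, c). \<forall>\<mu><k. r \<mu> \<in> A}.
         {T. Determinant.det (sq_mat (\<lambda>\<nu> \<mu>. T (\<phi> (r \<mu>) (c \<nu>))) k) \<noteq> 0})"
    by (auto simp: rowrank_ge_iff_minor[OF assms])
  moreover have "open {T :: 'b \<Rightarrow> real. Determinant.det (sq_mat (\<lambda>\<nu> \<mu>. T (\<phi> (r \<mu>) (c \<nu>))) k) \<noteq> 0}"
    for r c by (intro open_Collect_neq continuous_on_det_sq_mat continuous_on_product_coordinates
        continuous_on_const)
  ultimately show ?thesis by auto
qed

lemma polyfun_sum: "finite I \<Longrightarrow> (\<And>i. i \<in> I \<Longrightarrow> polyfun (f i)) \<Longrightarrow> polyfun (\<lambda>T. \<Sum>i\<in>I. f i T)"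
  by (induction I rule: finite_induct) (auto intro: padd pconst[of 0, simplified])

lemma polyfun_prod: "finite I \<Longrightarrow> (\<And>i. i \<in> I \<Longrightarrow> polyfun (f i)) \<Longrightarrow> polyfun (\<lambda>T. \<Prod>i\<in>I. f i T)"
  by (induction I rule: finite_induct) (auto intro: pmult pconst[of 1, simplified])

lemma polyfun_det:
  assumes "\<And>i j. polyfun (\<lambda>T. M T i j)"
  shows "polyfun (\<lambda>T. Determinant.det (sq_mat (M T) k))"
  unfolding det_sq_mat_expand
  by (intro polyfun_sum polyfun_prod pmult pconst assms) (simp_all add: finite_permutations)

lemma zclosed_rowrank_less:
  assumes "finite A"
  shows "zclosed d n {T \<in> tensors d n. rowrank ((\<lambda>a c. T (\<phi> a c)) ` A) < k}"
  unfolding zclosed_def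
proof (intro exI conjI)
  let ?P = "{\<lambda>T. Determinant.det (sq_mat (\<lambda>\<nu> \<mu>. T (\<phi> (r \<mu>) (c \<nu>))) k) | r c. \<forall>\<mu><k. r \<mu> \<in> A}"
  show "\<forall>p\<in>?P. polyfun p" by (auto intro!: polyfun_det pcoord)
  have "rowrank ((\<lambda>a c. T (\<phi> a c)) ` A) < k \<longleftrightarrow> (\<forall>p\<in>?P. p T = 0)" for T
    using rowrank_ge_iff_minor[OF assms, of k "\<lambda>a c. T (\<phi> a c)"] by auto
  then show "{T \<in> tensors d n. rowrank ((\<lambda>a c. T (\<phi> a c)) ` A) < k} = {T \<in> tensors d n. \<forall>p\<in>?P. p T = 0}"
    by simp
qed

lemma zclosed_Un:
  assumes "zclosed d n Z1" "zclosed d n Z2"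
  shows "zclosed d n (Z1 \<union> Z2)"
proof -
  obtain P1 where P1: "\<forall>p\<in>P1. polyfun p" "Z1 = {T \<in> tensors d n. \<forall>p\<in>P1. p T = 0}"
    using assms(1) unfolding zclosed_def by blast
  obtain P2 where P2: "\<forall>p\<in>P2. polyfun p" "Z2 = {T \<in> tensors d n. \<forall>p\<in>P2. p T = 0}"
    using assms(2) unfolding zclosed_def by blast
  note P = P1 P2
  let ?P = "{\<lambda>T. p T * q T | p q. p \<in> P1 \<and> q \<in> P2}"
  have "\<forall>r\<in>?P. polyfun r" using P by (auto intro: pmult)
  moreover have "Z1 \<union> Z2 = {T \<in> tensors d n. \<forall>r\<in>?P. r T = 0}"
  proof (intro equalityI subsetI)
    fix T assume "T \<in> Z1 \<union> Z2"
    then show "T \<in> {T \<in> tensors d n. \<forall>r\<in>?P. r T = 0}" using P by auto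
  next
    fix T assume T: "T \<in> {T \<in> tensors d n. \<forall>r\<in>?P. r T = 0}"
    show "T \<in> Z1 \<union> Z2"
    proof (cases "\<forall>p\<in>P1. p T = 0")
      case True
      then show ?thesis using T P(2) by auto
    next
      case False
      then obtain p where p: "p \<in> P1" "p T \<noteq> 0" by blast
      have "q T = 0" if q: "q \<in> P2" for q
      proof -
        have mem: "(\<lambda>T. p T * q T) \<in> ?P"
          using p(1) q by (intro CollectI exI[of _ p] exI[of _ q]) simp
        have ball: "\<forall>r\<in>?P. r T = 0" using T by simp
        have "p T * q T = 0" using ball[rule_format, OF mem] by simp
        then show ?thesis using p by simp
      qed
      then show ?thesis using T P(4) by auto
    qed
  qed
  ultimately show ?thesis unfolding zclosed_def by blast
qed

lemma zclosed_Bex: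
  assumes "finite I" "\<And>i. i \<in> I \<Longrightarrow> zclosed d n {T \<in> tensors d n. P i T}"
  shows "zclosed d n {T \<in> tensors d n. \<exists>i\<in>I. P i T}"
  using assms
proof (induction I rule: finite_induct)
  case empty
  have "{T \<in> tensors d n. \<exists>i\<in>{}. P i T} = {T \<in> tensors d n. \<forall>p\<in>{\<lambda>T. 1}. p T = (0::real)}"
    by simp
  then show ?case unfolding zclosed_def using pconst[of 1] by blast
next
  case (insert i I)
  have "{T \<in> tensors d n. \<exists>j\<in>insert i I. P j T} =
      {T \<in> tensors d n. P i T} \<union> {T \<in> tensors d n. \<exists>j\<in>I. P j T}"
    by auto
  then show ?case using zclosed_Un insert by simp
qed

lemma zclosed_Ball:
  assumes "\<And>i. i \<in> I \<Longrightarrow> zclosed d n {T \<in> tensors d n. P i T}"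
  shows "zclosed d n {T \<in> tensors d n. \<forall>i\<in>I. P i T}"
proof -
  have "\<forall>i\<in>I. \<exists>Q. (\<forall>p\<in>Q. polyfun p) \<and> {T \<in> tensors d n. P i T} = {T \<in> tensors d n. \<forall>p\<in>Q. p T = 0}"
    using assms unfolding zclosed_def by blast
  from bchoice[OF this] obtain Q where Q: "\<forall>i\<in>I. (\<forall>p\<in>Q i. polyfun p) \<and>
      {T \<in> tensors d n. P i T} = {T \<in> tensors d n. \<forall>p\<in>Q i. p T = 0}"
    by blast
  have "P i T \<longleftrightarrow> (\<forall>p\<in>Q i. p T = 0)" if "i \<in> I" "T \<in> tensors d n" for i T
  proof -
    have "{T \<in> tensors d n. P i T} = {T \<in> tensors d n. \<forall>p\<in>Q i. p T = 0}"
      using Q that(1) by blast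
    then show ?thesis using that(2) by (auto simp: set_eq_iff)
  qed
  then have "{T \<in> tensors d n. \<forall>i\<in>I. P i T} = {T \<in> tensors d n. \<forall>p\<in>(\<Union>i\<in>I. Q i). p T = 0}"
    by auto
  moreover have "\<forall>p\<in>(\<Union>i\<in>I. Q i). polyfun p" using Q by blast
  ultimately show ?thesis unfolding zclosed_def by blast
qed

section \<open>The action of \<open>G\<close> and ranks\<close>

lemma finite_idxs: "finite (idxs d n)"
  unfolding idxs_def by (rule finite_PiE) auto

lemma finite_tt_rows: "finite ((\<lambda>r c. T (merge_idx i r c)) ` (\<Pi>\<^sub>E k\<in>{1..i}. {..<n k}))"
  by (intro finite_imageI finite_PiE) auto

lemma inj_on_merge_idx: "inj_on (\<lambda>(a, b). merge_idx i a b) (Pi\<^sub>E {1..i} A \<times> Pi\<^sub>E {i+1..D} A)"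
proof (rule inj_onI, clarify)
  fix a b a' b'
  assume a: "a \<in> Pi\<^sub>E {1..i} A" "a' \<in> Pi\<^sub>E {1..i} A" and b: "b \<in> Pi\<^sub>E {i+1..D} A" "b' \<in> Pi\<^sub>E {i+1..D} A"
    and eq: "merge_idx i a b = merge_idx i a' b'"
  have "a x = a' x \<and> b x = b' x" for x
  proof (cases "x \<le> i")
    case True
    then show ?thesis using fun_cong[OF eq, of x] b by (auto simp: merge_idx_def PiE_def extensional_def)
  next
    case False
    then show ?thesis using fun_cong[OF eq, of x] a by (auto simp: merge_idx_def PiE_def extensional_def)
  qed
  then show "a = a' \<and> b = b'" by (simp add: fun_eq_iff)
qed

lemma merge_idx_image_PiE:
  assumes iD: "i \<le> D"
  shows "(\<lambda>(a, b). merge_idx i a b) ` (Pi\<^sub>E {1..i} A \<times> Pi\<^sub>E {i+1..D} A) = Pi\<^sub>E {1..D} A"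
proof (intro equalityI subsetI)
  fix k assume "k \<in> (\<lambda>(a, b). merge_idx i a b) ` (Pi\<^sub>E {1..i} A \<times> Pi\<^sub>E {i+1..D} A)"
  then obtain a b where ab: "a \<in> Pi\<^sub>E {1..i} A" "b \<in> Pi\<^sub>E {i+1..D} A" "k = merge_idx i a b" by auto
  show "k \<in> Pi\<^sub>E {1..D} A"
    unfolding PiE_iff extensional_def mem_Collect_eq
  proof (intro conjI ballI allI impI)
    fix x assume "x \<in> {1..D}"
    then show "k x \<in> A x" using ab by (cases "x \<le> i") (auto simp: merge_idx_def PiE_iff)
  next
    fix x assume "x \<notin> {1..D}"
    then show "k x = undefined"
      using ab iD by (cases "x \<le> i") (auto simp: merge_idx_def PiE_def extensional_def)
  qed
next
  fix k assume k: "k \<in> Pi\<^sub>E {1..D} A"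
  have "k = merge_idx i (restrict k {1..i}) (restrict k {i+1..D})"
  proof
    fix x show "k x = merge_idx i (restrict k {1..i}) (restrict k {i+1..D}) x"
      using k iD by (cases "x = 0"; cases "x \<le> i"; cases "x \<le> D") (auto simp: merge_idx_def PiE_def extensional_def)
  qed
  moreover have "restrict k {1..i} \<in> Pi\<^sub>E {1..i} A" "restrict k {i+1..D} \<in> Pi\<^sub>E {i+1..D} A"
    using k iD by (auto simp: PiE_iff)
  ultimately show "k \<in> (\<lambda>(a, b). merge_idx i a b) ` (Pi\<^sub>E {1..i} A \<times> Pi\<^sub>E {i+1..D} A)"
    by (intro image_eqI[of _ _ "(restrict k {1..i}, restrict k {i+1..D})"]) simp_all
qed

lemma sum_PiE_split:
  fixes F :: "(nat \<Rightarrow> nat) \<Rightarrow> 'a::comm_monoid_add"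
  assumes "i \<le> D"
  shows "(\<Sum>k\<in>Pi\<^sub>E {1..D} A. F k) =
         (\<Sum>k1\<in>Pi\<^sub>E {1..i} A. \<Sum>k2\<in>Pi\<^sub>E {i+1..D} A. F (merge_idx i k1 k2))"
proof -
  have "(\<Sum>k1\<in>Pi\<^sub>E {1..i} A. \<Sum>k2\<in>Pi\<^sub>E {i+1..D} A. F (merge_idx i k1 k2)) =
      (\<Sum>p\<in>Pi\<^sub>E {1..i} A \<times> Pi\<^sub>E {i+1..D} A. F ((\<lambda>(a, b). merge_idx i a b) p))"
    by (simp only: sum.cartesian_product) (rule sum.cong, auto)
  also have "\<dots> = (\<Sum>k\<in>Pi\<^sub>E {1..D} A. F k)"
    using sum.reindex[OF inj_on_merge_idx[of i A D], of F] merge_idx_image_PiE[OF assms, of A]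
    by (simp add: comp_def)
  finally show ?thesis ..
qed

lemma prod_atLeastAtMost_split:
  fixes f :: "nat \<Rightarrow> 'a::comm_monoid_mult"
  assumes "i \<le> D"
  shows "(\<Prod>x\<in>{1..D}. f x) = (\<Prod>x\<in>{1..i}. f x) * (\<Prod>x\<in>{i+1..D}. f x)"
proof -
  have "{1..D} = {1..i} \<union> {i+1..D}" using assms by auto
  then show ?thesis by (simp add: prod.union_disjoint[symmetric] ivl_disj_int)
qed

lemma sum_PiE_remove:
  fixes F :: "(nat \<Rightarrow> nat) \<Rightarrow> 'a::comm_monoid_add"
  assumes l: "l \<in> I"
  shows "(\<Sum>k\<in>Pi\<^sub>E I A. F k) = (\<Sum>b\<in>A l. \<Sum>k'\<in>Pi\<^sub>E (I - {l}) A. F (k'(l := b)))"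
proof -
  have I: "I = insert l (I - {l})" using l by auto
  have "(\<Sum>k\<in>Pi\<^sub>E I A. F k) = (\<Sum>k\<in>Pi\<^sub>E (insert l (I - {l})) A. F k)" using I by simp
  also have "\<dots> = (\<Sum>k\<in>(\<lambda>(y, g). g(l := y)) ` (A l \<times> Pi\<^sub>E (I - {l}) A). F k)"
    by (rule arg_cong[where f="sum F"], rule PiE_insert_eq)
  also have "\<dots> = (\<Sum>p\<in>A l \<times> Pi\<^sub>E (I - {l}) A. F ((\<lambda>(y, g). g(l := y)) p))"
  proof -
    have "inj_on (\<lambda>(y, g). g(l := y)) (A l \<times> Pi\<^sub>E (I - {l}) A)" by (rule inj_combinator) simp
    then show ?thesis by (simp only: sum.reindex comp_def)
  qed
  also have "\<dots> = (\<Sum>b\<in>A l. \<Sum>k'\<in>Pi\<^sub>E (I - {l}) A. F (k'(l := b)))"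
    by (simp only: sum.cartesian_product) (rule sum.cong, auto)
  finally show ?thesis .
qed

lemma idxs_less: "j \<in> idxs d n \<Longrightarrow> x \<in> {1..d} \<Longrightarrow> j x < n x"
  unfolding idxs_def by (auto simp: PiE_iff)

lemma act_tensors: "act d n g T \<in> tensors d n"
  unfolding tensors_def act_def by auto

lemma act_cong:
  assumes "\<And>x a b. x \<in> {1..d} \<Longrightarrow> a < n x \<Longrightarrow> b < n x \<Longrightarrow> g x a b = g' x a b"
  shows "act d n g T = act d n g' T"
  unfolding act_def
proof (rule ext)
  fix j
  show "(if j \<in> idxs d n then \<Sum>k\<in>idxs d n. (\<Prod>i = 1..d. g i (j i) (k i)) * T k else 0) =
        (if j \<in> idxs d n then \<Sum>k\<in>idxs d n. (\<Prod>i = 1..d. g' i (j i) (k i)) * T k else 0)"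
    using assms idxs_less by (auto intro!: sum.cong prod.cong)
qed

lemma act_id:
  assumes T: "T \<in> tensors d n"
  shows "act d n (\<lambda>x a b. if a = b then 1 else 0) T = T"
proof (rule ext)
  fix j
  show "act d n (\<lambda>x a b. if a = b then 1 else 0) T j = T j"
  proof (cases "j \<in> idxs d n")
    case True
    have "(\<Sum>k\<in>idxs d n. (\<Prod>i = 1..d. (if j i = k i then 1 else 0)) * T k) =
          (\<Sum>k\<in>idxs d n. if k = j then T k else 0)"
    proof (rule sum.cong[OF refl])
      fix k assume k: "k \<in> idxs d n"
      show "(\<Prod>i = 1..d. (if j i = k i then 1 else 0)) * T k = (if k = j then T k else 0)"
      proof (cases "k = j")
        case False
        then obtain x where "k x \<noteq> j x" by auto
        moreover have "x \<in> {1..d}"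
        proof (rule ccontr)
          assume "x \<notin> {1..d}"
          then have "k x = undefined" "j x = undefined" using k True by (auto simp: idxs_def PiE_def extensional_def)
          then show False using \<open>k x \<noteq> j x\<close> by simp
        qed
        ultimately have "(\<Prod>i = 1..d. (if j i = k i then 1 else 0)) = (0::real)"
          by (intro prod_zero) (auto intro!: bexI[of _ x])
        then show ?thesis using False by simp
      qed simp
    qed
    also have "\<dots> = T j" using True finite_idxs by (simp add: sum.delta')
    finally show ?thesis using True by (simp add: act_def)
  next
    case False
    then show ?thesis using T by (simp add: act_def tensors_def)
  qed
qed

lemma act_comp:
  assumes T: "T \<in> tensors d n"
  shows "act d n g (act d n h T) = act d n (\<lambda>x a b. \<Sum>c<n x. g x a c * h x c b) T"
proof (rule ext)
  fix j
  show "act d n g (act d n h T) j = act d n (\<lambda>x a b. \<Sum>c<n x. g x a c * h x c b) T j"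
  proof (cases "j \<in> idxs d n")
    case True
    let ?B = "idxs d n"
    have "act d n g (act d n h T) j =
      (\<Sum>k\<in>?B. (\<Prod>i = 1..d. g i (j i) (k i)) * (\<Sum>k'\<in>?B. (\<Prod>i = 1..d. h i (k i) (k' i)) * T k'))"
      using True by (simp add: act_def)
    also have "\<dots> = (\<Sum>k\<in>?B. \<Sum>k'\<in>?B. (\<Prod>i = 1..d. g i (j i) (k i)) * (\<Prod>i = 1..d. h i (k i) (k' i)) * T k')"
      by (simp add: sum_distrib_left mult.assoc)
    also have "\<dots> = (\<Sum>k'\<in>?B. \<Sum>k\<in>?B. (\<Prod>i = 1..d. g i (j i) (k i) * h i (k i) (k' i)) * T k')"
      by (subst sum.swap) (simp add: prod.distrib)
    also have "\<dots> = (\<Sum>k'\<in>?B. (\<Sum>k\<in>?B. (\<Prod>i = 1..d. g i (j i) (k i) * h i (k i) (k' i))) * T k')"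
      by (simp add: sum_distrib_right)
    also have "\<dots> = (\<Sum>k'\<in>?B. (\<Prod>i = 1..d. \<Sum>c<n i. g i (j i) c * h i c (k' i)) * T k')"
    proof (rule sum.cong[OF refl])
      fix k' assume "k' \<in> ?B"
      have "(\<Prod>i = 1..d. \<Sum>c<n i. g i (j i) c * h i c (k' i)) =
            (\<Sum>k\<in>?B. (\<Prod>i = 1..d. g i (j i) (k i) * h i (k i) (k' i)))"
        unfolding idxs_def by (rule prod_sum_PiE) auto
      then show "(\<Sum>k\<in>?B. (\<Prod>i = 1..d. g i (j i) (k i) * h i (k i) (k' i))) * T k' =
                 (\<Prod>i = 1..d. \<Sum>c<n i. g i (j i) c * h i c (k' i)) * T k'" by simp
    qed
    finally show ?thesis using True by (simp add: act_def)
  next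
    case False
    then show ?thesis by (simp add: act_def)
  qed
qed

lemma act_left_inverse:
  assumes g: "g \<in> Grp d n"
  shows "\<exists>g'. \<forall>T\<in>tensors d n. act d n g' (act d n g T) = T"
proof -
  have "\<forall>x\<in>{1..d}. \<exists>B. \<forall>r<n x. \<forall>c<n x. (\<Sum>k<n x. B r k * g x k c) = (if r = c then 1 else 0)"
    using g unfolding Grp_def GLn_def by blast
  then obtain B where B: "\<And>x r c. x \<in> {1..d} \<Longrightarrow> r < n x \<Longrightarrow> c < n x \<Longrightarrow>
      (\<Sum>k<n x. B x r k * g x k c) = (if r = c then 1 else 0)"
    by metis
  have "act d n B (act d n g T) = T" if T: "T \<in> tensors d n" for T
  proof -
    have "act d n B (act d n g T) = act d n (\<lambda>x a b. \<Sum>c<n x. B x a c * g x c b) T" by (rule act_comp[OF T])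
    also have "\<dots> = act d n (\<lambda>x a b. if a = b then 1 else 0) T"
      by (rule act_cong) (simp add: B)
    also have "\<dots> = T" by (rule act_id[OF T])
    finally show ?thesis .
  qed
  then show ?thesis by blast
qed

definition tail_in_box :: "nat \<Rightarrow> (nat \<Rightarrow> nat) \<Rightarrow> nat \<Rightarrow> (nat \<Rightarrow> nat) \<Rightarrow> bool" where
  "tail_in_box d n i c \<longleftrightarrow> (\<forall>x\<in>{i+1..d}. c x < n x) \<and> (\<forall>x. d < x \<longrightarrow> c x = undefined)"

definition others_in_box :: "nat \<Rightarrow> (nat \<Rightarrow> nat) \<Rightarrow> nat \<Rightarrow> (nat \<Rightarrow> nat) \<Rightarrow> bool" where
  "others_in_box d n l c \<longleftrightarrow> (\<forall>x\<in>{1..d}-{l}. c x < n x) \<and> (\<forall>x. x \<notin> {1..d} \<longrightarrow> c x = undefined)"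

lemma merge_idx_in_idxs_iff:
  assumes r: "r \<in> Pi\<^sub>E {1..i} (\<lambda>k. {..<n k})" and i: "i \<le> d"
  shows "merge_idx i r c \<in> idxs d n \<longleftrightarrow> tail_in_box d n i c"
proof
  assume H: "merge_idx i r c \<in> idxs d n"
  show "tail_in_box d n i c" unfolding tail_in_box_def
  proof (intro conjI ballI allI impI)
    fix x assume x: "x \<in> {i+1..d}"
    then have "merge_idx i r c x < n x" using idxs_less[OF H, of x] by auto
    then show "c x < n x" using x by (simp add: merge_idx_def)
  next
    fix x assume x: "d < x"
    then have "merge_idx i r c x = undefined" using H by (auto simp: idxs_def PiE_def extensional_def)
    then show "c x = undefined" using x i by (simp add: merge_idx_def)
  qed
next
  assume H: "tail_in_box d n i c"
  show "merge_idx i r c \<in> idxs d n"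
    unfolding idxs_def PiE_iff extensional_def mem_Collect_eq
  proof (intro conjI ballI allI impI)
    fix x assume x: "x \<in> {1..d}"
    then show "merge_idx i r c x \<in> {..<n x}"
      using H r by (cases "x \<le> i") (auto simp: merge_idx_def tail_in_box_def PiE_iff)
  next
    fix x assume x: "x \<notin> {1..d}"
    show "merge_idx i r c x = undefined"
    proof (cases "x = 0")
      case True then show ?thesis using r by (auto simp: merge_idx_def PiE_def extensional_def)
    next
      case False then have "d < x" using x by auto
      then show ?thesis using H i by (auto simp: merge_idx_def tail_in_box_def)
    qed
  qed
qed

lemma upd_in_idxs_iff:
  assumes l: "l \<in> {1..d}" and a: "a < n l"
  shows "c(l := a) \<in> idxs d n \<longleftrightarrow> others_in_box d n l c"
proof
  assume H: "c(l := a) \<in> idxs d n"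
  show "others_in_box d n l c" unfolding others_in_box_def
  proof (intro conjI ballI allI impI)
    fix x assume x: "x \<in> {1..d} - {l}"
    then show "c x < n x" using idxs_less[OF H, of x] by auto
  next
    fix x assume x: "x \<notin> {1..d}"
    then show "c x = undefined" using H l by (auto simp: idxs_def PiE_def extensional_def split: if_splits)
  qed
next
  assume H: "others_in_box d n l c"
  show "c(l := a) \<in> idxs d n"
    unfolding idxs_def PiE_iff extensional_def mem_Collect_eq using H a l by (auto simp: others_in_box_def)
qed

definition act_tail :: "nat \<Rightarrow> (nat \<Rightarrow> nat) \<Rightarrow> (nat \<Rightarrow> nat \<Rightarrow> nat \<Rightarrow> real) \<Rightarrow> nat \<Rightarrow>
    ((nat \<Rightarrow> nat) \<Rightarrow> real) \<Rightarrow> (nat \<Rightarrow> nat) \<Rightarrow> real" where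
  "act_tail d n g i f c = (if tail_in_box d n i c then
     (\<Sum>k\<in>Pi\<^sub>E {i+1..d} (\<lambda>k. {..<n k}). (\<Prod>x\<in>{i+1..d}. g x (c x) (k x)) * f k) else 0)"

definition act_others :: "nat \<Rightarrow> (nat \<Rightarrow> nat) \<Rightarrow> (nat \<Rightarrow> nat \<Rightarrow> nat \<Rightarrow> real) \<Rightarrow> nat \<Rightarrow>
    ((nat \<Rightarrow> nat) \<Rightarrow> real) \<Rightarrow> (nat \<Rightarrow> nat) \<Rightarrow> real" where
  "act_others d n g l f c = (if others_in_box d n l c then
     (\<Sum>k\<in>Pi\<^sub>E ({1..d} - {l}) (\<lambda>k. {..<n k}). (\<Prod>x\<in>{1..d}-{l}. g x (c x) (k x)) * f k) else 0)"

lemma act_merge_idx: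
  assumes r: "r \<in> Pi\<^sub>E {1..i} (\<lambda>k. {..<n k})" and i: "i \<le> d"
  shows "act d n g T (merge_idx i r c) = (\<Sum>k\<in>Pi\<^sub>E {1..i} (\<lambda>k. {..<n k}).
    (\<Prod>x\<in>{1..i}. g x (r x) (k x)) * act_tail d n g i (\<lambda>c'. T (merge_idx i k c')) c)"
proof (cases "tail_in_box d n i c")
  case True
  let ?R = "Pi\<^sub>E {1..i} (\<lambda>k. {..<n k})" and ?C = "Pi\<^sub>E {i+1..d} (\<lambda>k. {..<n k})"
  have "act d n g T (merge_idx i r c) =
      (\<Sum>k\<in>Pi\<^sub>E {1..d} (\<lambda>k. {..<n k}). (\<Prod>x\<in>{1..d}. g x (merge_idx i r c x) (k x)) * T k)"
    using True merge_idx_in_idxs_iff[of r i n d c, OF r i] by (simp add: act_def idxs_def)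
  also have "\<dots> = (\<Sum>k1\<in>?R. \<Sum>k2\<in>?C.
      (\<Prod>x\<in>{1..d}. g x (merge_idx i r c x) (merge_idx i k1 k2 x)) * T (merge_idx i k1 k2))"
    by (rule sum_PiE_split) (use i in auto)
  also have "\<dots> = (\<Sum>k1\<in>?R. \<Sum>k2\<in>?C.
      (\<Prod>x\<in>{1..i}. g x (r x) (k1 x)) * ((\<Prod>x\<in>{i+1..d}. g x (c x) (k2 x)) * T (merge_idx i k1 k2)))"
  proof (intro sum.cong refl)
    fix k1 k2
    have "(\<Prod>x\<in>{1..d}. g x (merge_idx i r c x) (merge_idx i k1 k2 x)) =
        (\<Prod>x\<in>{1..i}. g x (merge_idx i r c x) (merge_idx i k1 k2 x)) *
        (\<Prod>x\<in>{i+1..d}. g x (merge_idx i r c x) (merge_idx i k1 k2 x))"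
      by (rule prod_atLeastAtMost_split[OF i])
    also have "\<dots> = (\<Prod>x\<in>{1..i}. g x (r x) (k1 x)) * (\<Prod>x\<in>{i+1..d}. g x (c x) (k2 x))"
      by (intro arg_cong2[where f="(*)"] prod.cong refl) (auto simp: merge_idx_def)
    finally show "(\<Prod>x\<in>{1..d}. g x (merge_idx i r c x) (merge_idx i k1 k2 x)) * T (merge_idx i k1 k2) =
        (\<Prod>x\<in>{1..i}. g x (r x) (k1 x)) * ((\<Prod>x\<in>{i+1..d}. g x (c x) (k2 x)) * T (merge_idx i k1 k2))"
      by simp
  qed
  also have "\<dots> = (\<Sum>k1\<in>?R. (\<Prod>x\<in>{1..i}. g x (r x) (k1 x)) * act_tail d n g i (\<lambda>c'. T (merge_idx i k1 c')) c)"
    using True by (simp add: act_tail_def sum_distrib_left)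
  finally show ?thesis .
next
  case False
  then show ?thesis using merge_idx_in_idxs_iff[of r i n d c, OF r i] by (simp add: act_def act_tail_def)
qed

lemma act_upd_idx:
  assumes l: "l \<in> {1..d}" and a: "a < n l"
  shows "act d n g T (c(l := a)) = (\<Sum>b<n l. g l a b * act_others d n g l (\<lambda>c'. T (c'(l := b))) c)"
proof (cases "others_in_box d n l c")
  case True
  let ?K = "Pi\<^sub>E ({1..d} - {l}) (\<lambda>k. {..<n k})"
  have "act d n g T (c(l := a)) = (\<Sum>k\<in>Pi\<^sub>E {1..d} (\<lambda>k. {..<n k}). (\<Prod>x\<in>{1..d}. g x ((c(l := a)) x) (k x)) * T k)"
    using True upd_in_idxs_iff[of l d a n c, OF l a] by (simp add: act_def idxs_def)
  also have "\<dots> = (\<Sum>b\<in>{..<n l}. \<Sum>k'\<in>?K. (\<Prod>x\<in>{1..d}. g x ((c(l := a)) x) ((k'(l := b)) x)) * T (k'(l := b)))"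
    by (rule sum_PiE_remove) (use l in auto)
  also have "\<dots> = (\<Sum>b\<in>{..<n l}. \<Sum>k'\<in>?K. g l a b * ((\<Prod>x\<in>{1..d}-{l}. g x (c x) (k' x)) * T (k'(l := b))))"
  proof (intro sum.cong refl)
    fix b k'
    have "(\<Prod>x\<in>{1..d}. g x ((c(l := a)) x) ((k'(l := b)) x)) =
        g l a b * (\<Prod>x\<in>{1..d}-{l}. g x ((c(l := a)) x) ((k'(l := b)) x))"
      using l by (simp add: prod.remove)
    also have "(\<Prod>x\<in>{1..d}-{l}. g x ((c(l := a)) x) ((k'(l := b)) x)) = (\<Prod>x\<in>{1..d}-{l}. g x (c x) (k' x))"
      by (rule prod.cong) auto
    finally show "(\<Prod>x\<in>{1..d}. g x ((c(l := a)) x) ((k'(l := b)) x)) * T (k'(l := b)) =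
        g l a b * ((\<Prod>x\<in>{1..d}-{l}. g x (c x) (k' x)) * T (k'(l := b)))" by simp
  qed
  also have "\<dots> = (\<Sum>b<n l. g l a b * act_others d n g l (\<lambda>c'. T (c'(l := b))) c)"
    using True by (simp add: act_others_def sum_distrib_left)
  finally show ?thesis .
next
  case False
  then show ?thesis using upd_in_idxs_iff[of l d a n c, OF l a] by (simp add: act_def act_others_def)
qed

lemma tt_rank_act_le:
  assumes i: "i \<le> d"
  shows "tt_rank_i d n (act d n g T) i \<le> tt_rank_i d n T i"
proof -
  let ?R = "Pi\<^sub>E {1..i} (\<lambda>k. {..<n k})"
  have lin: "Vector_Spaces.linear (\<lambda>a (f::(nat\<Rightarrow>nat)\<Rightarrow>real) x. a * f x) (\<lambda>a (f::(nat\<Rightarrow>nat)\<Rightarrow>real) x. a * f x)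
      (act_tail d n g i)"
    by (rule linear_fvI) (auto simp: act_tail_def fun_eq_iff sum.distrib sum_distrib_left algebra_simps)
  have "(\<lambda>c. act d n g T (merge_idx i r c)) \<in> fv.span (act_tail d n g i ` (\<lambda>r c. T (merge_idx i r c)) ` ?R)"
    if r: "r \<in> ?R" for r
    unfolding act_merge_idx[OF r i]
    by (rule fv_span_sumI) (auto intro!: fv.span_base finite_PiE)
  then have sub: "(\<lambda>r c. act d n g T (merge_idx i r c)) ` ?R \<subseteq> fv.span (act_tail d n g i ` (\<lambda>r c. T (merge_idx i r c)) ` ?R)"
    by blast
  show ?thesis
    unfolding tt_rank_i_def by (rule rowrank_le_if_span_image[OF lin _ sub]) (auto intro: finite_PiE)
qed

lemma ml_rank_act_le:
  assumes l: "l \<in> {1..d}"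
  shows "ml_rank_i d n (act d n g T) l \<le> ml_rank_i d n T l"
proof -
  have lin: "Vector_Spaces.linear (\<lambda>a (f::(nat\<Rightarrow>nat)\<Rightarrow>real) x. a * f x) (\<lambda>a (f::(nat\<Rightarrow>nat)\<Rightarrow>real) x. a * f x)
      (act_others d n g l)"
    by (rule linear_fvI) (auto simp: act_others_def fun_eq_iff sum.distrib sum_distrib_left algebra_simps)
  have "(\<lambda>c. act d n g T (c(l := a))) \<in> fv.span (act_others d n g l ` (\<lambda>a c. T (c(l := a))) ` {..<n l})"
    if a: "a < n l" for a
    unfolding act_upd_idx[of l d a n, OF l a]
    by (rule fv_span_sumI) (auto intro!: fv.span_base)
  then have sub: "(\<lambda>a c. act d n g T (c(l := a))) ` {..<n l} \<subseteq> fv.span (act_others d n g l ` (\<lambda>a c. T (c(l := a))) ` {..<n l})"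
    by blast
  show ?thesis
    unfolding ml_rank_i_def by (rule rowrank_le_if_span_image[OF lin _ sub]) simp
qed

lemma tt_rank_act_eq:
  assumes "g \<in> Grp d n" "T \<in> tensors d n" "i \<le> d"
  shows "tt_rank_i d n (act d n g T) i = tt_rank_i d n T i"
proof -
  obtain g' where "act d n g' (act d n g T) = T" using act_left_inverse assms(1,2) by blast
  then have "tt_rank_i d n T i \<le> tt_rank_i d n (act d n g T) i"
    using tt_rank_act_le[OF assms(3), of n g' "act d n g T"] by simp
  then show ?thesis using tt_rank_act_le[OF assms(3), of n g T] by simp
qed

lemma ml_rank_act_eq:
  assumes "g \<in> Grp d n" "T \<in> tensors d n" "l \<in> {1..d}"
  shows "ml_rank_i d n (act d n g T) l = ml_rank_i d n T l"
proof -
  obtain g' where "act d n g' (act d n g T) = T" using act_left_inverse assms(1,2) by blast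
  then have "ml_rank_i d n T l \<le> ml_rank_i d n (act d n g T) l"
    using ml_rank_act_le[OF assms(3), of n g' "act d n g T"] by simp
  then show ?thesis using ml_rank_act_le[OF assms(3), of n g T] by simp
qed

lemma act_ttrank_fibre:
  assumes "g \<in> Grp d n" "T \<in> ttrank_fibre d n s"
  shows "act d n g T \<in> ttrank_fibre d n s"
  using assms tt_rank_act_eq[OF assms(1)] act_tensors by (auto simp: ttrank_fibre_def)

section \<open>The tensor \<open>ttT\<close> and the ranks of its images\<close>

lemma prod_indicator:
  assumes "finite L"
  shows "(\<Prod>l\<in>L. if P l then (1::real) else 0) = (if \<forall>l\<in>L. P l then 1 else 0)"
  using assms by (induction L rule: finite_induct) auto

locale tt_format =
  fixes d :: nat and n s :: "nat \<Rightarrow> nat"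
  assumes d_ge_3: "d \<ge> 3" and s_pos: "\<forall>i\<in>{1..d-1}. s i > 0"
    and s_0: "s 0 = 1" and s_d: "s d = 1" and s_le_n: "\<forall>i\<in>{1..d}. s (i - 1) * s i \<le> n i"
begin

lemma s_gt_0: "l \<le> d \<Longrightarrow> 0 < s l"
  using s_pos s_0 s_d by (cases "l = 0"; cases "l = d") auto

definition alphas where "alphas = Pi\<^sub>E {1..d-1} (\<lambda>k. {..<s k})"

lemma finite_alphas: "finite alphas"
  unfolding alphas_def by (rule finite_PiE) auto

lemma alphas_less: "\<alpha> \<in> alphas \<Longrightarrow> x \<in> {1..d-1} \<Longrightarrow> \<alpha> x < s x"
  unfolding alphas_def by (auto simp: PiE_iff)

lemma tt_comp_less:
  assumes a: "\<alpha> \<in> alphas" and l: "l \<in> {1..d}"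
  shows "tt_comp d s \<alpha> l < s (l - 1) * s l"
proof -
  consider "l = 1" | "l = d" | "l \<noteq> 1" "l \<noteq> d" by blast
  then show ?thesis
  proof cases
    case 1
    then have "1 \<noteq> d" using d_ge_3 by auto
    then show ?thesis using 1 alphas_less[OF a, of 1] d_ge_3 s_0 by (auto simp: tt_comp_def)
  next
    case 2
    then have "d \<noteq> 1" using d_ge_3 by auto
    then show ?thesis using 2 alphas_less[OF a, of "d-1"] d_ge_3 s_d by (auto simp: tt_comp_def)
  next
    case 3
    have "l - 1 \<in> {1..d-1}" "l \<in> {1..d-1}" using 3 l by auto
    then have x1: "\<alpha> (l - 1) < s (l - 1)" and x2: "\<alpha> l < s l" using alphas_less[OF a] by auto
    have "\<alpha> (l - 1) * s l + \<alpha> l < \<alpha> (l - 1) * s l + s l" using x2 by simp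
    also have "\<dots> = (\<alpha> (l - 1) + 1) * s l" by simp
    also have "\<dots> \<le> s (l - 1) * s l" using x1 by (intro mult_le_mono1) simp
    finally show ?thesis using 3 by (simp add: tt_comp_def iota_def)
  qed
qed

lemma tt_comp_less_n: "\<alpha> \<in> alphas \<Longrightarrow> l \<in> {1..d} \<Longrightarrow> tt_comp d s \<alpha> l < n l"
  using tt_comp_less s_le_n less_le_trans by blast

lemma ttT_apply:
  "ttT d n s j = (if j \<in> idxs d n then (\<Sum>\<alpha>\<in>alphas. \<Prod>l\<in>{1..d}. if j l = tt_comp d s \<alpha> l then 1 else 0) else 0)"
  by (cases "j \<in> idxs d n") (simp_all add: ttT_def outer_def ebasis_def alphas_def)

lemma ttT_in_tensors: "ttT d n s \<in> tensors d n"
  unfolding tensors_def by (simp add: ttT_apply)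

lemma alpha_eq_tt_comp_mod:
  assumes a: "\<alpha> \<in> alphas" and k: "k \<in> {1..d-1}"
  shows "\<alpha> k = (if k = 1 then tt_comp d s \<alpha> 1 else tt_comp d s \<alpha> k mod s k)"
proof (cases "k = 1")
  case True
  then show ?thesis using d_ge_3 by (simp add: tt_comp_def)
next
  case False
  then have "k \<noteq> d" using k d_ge_3 by auto
  moreover have "\<alpha> k < s k" using alphas_less[OF a k] .
  ultimately show ?thesis using False by (simp add: tt_comp_def iota_def)
qed

lemma alpha_eq_tt_comp_div:
  assumes a: "\<alpha> \<in> alphas" and k: "k \<in> {1..d-1}"
  shows "\<alpha> k = (if k = d - 1 then tt_comp d s \<alpha> d else tt_comp d s \<alpha> (k+1) div s (k+1))"
proof (cases "k = d - 1")
  case True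
  then show ?thesis using d_ge_3 by (simp add: tt_comp_def)
next
  case False
  then have k1: "k + 1 \<noteq> d" "k + 1 \<noteq> 1" "k + 1 \<in> {1..d-1}" using k d_ge_3 by auto
  have "\<alpha> (k+1) < s (k+1)" using alphas_less[OF a k1(3)] .
  moreover have "s (k+1) > 0" using s_pos k1 by auto
  ultimately show ?thesis using False k1 by (simp add: tt_comp_def iota_def)
qed

text \<open>\<open>\<alpha> k\<close> can be read off mode \<open>k\<close> (modulo \<open>s k\<close>) and off mode \<open>k + 1\<close> (divided by
  \<open>s (k + 1)\<close>), so all modes but one determine \<open>\<alpha>\<close>.\<close>

lemma tt_comp_inj_except:
  assumes a: "\<alpha> \<in> alphas" and b: "\<beta> \<in> alphas" and eq: "\<forall>l\<in>{1..d} - {l0}. tt_comp d s \<alpha> l = tt_comp d s \<beta> l"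
  shows "\<alpha> = \<beta>"
proof
  fix x
  show "\<alpha> x = \<beta> x"
  proof (cases "x \<in> {1..d-1}")
    case False
    then show ?thesis using a b by (auto simp: alphas_def PiE_def extensional_def)
  next
    case True
    show ?thesis
    proof (cases "x = l0")
      case False
      have "x \<in> {1..d} - {l0}" using True False by auto
      then have e: "tt_comp d s \<alpha> x = tt_comp d s \<beta> x" using eq by blast
      show ?thesis using alpha_eq_tt_comp_mod[OF a True] alpha_eq_tt_comp_mod[OF b True] e by (cases "x = 1") auto
    next
      case l0: True
      have "x + 1 \<in> {1..d} - {l0}" using True l0 by auto
      then have e: "tt_comp d s \<alpha> (x+1) = tt_comp d s \<beta> (x+1)" using eq by blast
      have "x = d - 1 \<Longrightarrow> x + 1 = d" using d_ge_3 by auto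
      then show ?thesis using alpha_eq_tt_comp_div[OF a True] alpha_eq_tt_comp_div[OF b True] e by (cases "x = d - 1") auto
    qed
  qed
qed

lemma tt_comp_inj:
  assumes "\<alpha> \<in> alphas" "\<beta> \<in> alphas" "\<forall>l\<in>{1..d}. tt_comp d s \<alpha> l = tt_comp d s \<beta> l"
  shows "\<alpha> = \<beta>"
  using tt_comp_inj_except[OF assms(1,2), of 0] assms(3) by auto

lemma ttT_apply_indicator:
  assumes j: "j \<in> idxs d n"
  shows "ttT d n s j = (if \<exists>\<alpha>\<in>alphas. \<forall>l\<in>{1..d}. j l = tt_comp d s \<alpha> l then 1 else 0)"
proof -
  have "ttT d n s j = (\<Sum>\<alpha>\<in>alphas. if \<forall>l\<in>{1..d}. j l = tt_comp d s \<alpha> l then 1 else 0)"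
    using j by (simp add: ttT_apply prod_indicator)
  also have "\<dots> = (if \<exists>\<alpha>\<in>alphas. \<forall>l\<in>{1..d}. j l = tt_comp d s \<alpha> l then 1 else 0)"
  proof (cases "\<exists>\<alpha>\<in>alphas. \<forall>l\<in>{1..d}. j l = tt_comp d s \<alpha> l")
    case True
    then obtain \<alpha>0 where a0: "\<alpha>0 \<in> alphas" "\<forall>l\<in>{1..d}. j l = tt_comp d s \<alpha>0 l" by blast
    have "(\<Sum>\<alpha>\<in>alphas. if \<forall>l\<in>{1..d}. j l = tt_comp d s \<alpha> l then 1 else 0) = (\<Sum>\<alpha>\<in>alphas. if \<alpha> = \<alpha>0 then (1::real) else 0)"
    proof (rule sum.cong[OF refl])
      fix \<alpha> assume a: "\<alpha> \<in> alphas"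
      have "(\<forall>l\<in>{1..d}. j l = tt_comp d s \<alpha> l) \<longleftrightarrow> \<alpha> = \<alpha>0"
      proof
        assume H: "\<forall>l\<in>{1..d}. j l = tt_comp d s \<alpha> l"
        have "\<forall>l\<in>{1..d}. tt_comp d s \<alpha> l = tt_comp d s \<alpha>0 l" using H a0(2) by metis
        then show "\<alpha> = \<alpha>0" using tt_comp_inj[OF a a0(1)] by blast
      next
        assume "\<alpha> = \<alpha>0" then show "\<forall>l\<in>{1..d}. j l = tt_comp d s \<alpha> l" using a0(2) by blast
      qed
      then show "(if \<forall>l\<in>{1..d}. j l = tt_comp d s \<alpha> l then 1 else 0) = (if \<alpha> = \<alpha>0 then (1::real) else 0)" by simp
    qed
    also have "\<dots> = 1" using a0(1) finite_alphas by (simp add: sum.delta')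
    finally show ?thesis using True by simp
  next
    case False
    then show ?thesis by (intro trans[OF sum.neutral]) auto
  qed
  finally show ?thesis .
qed

lemma act_ttT_apply:
  assumes j: "j \<in> idxs d n"
  shows "act d n g (ttT d n s) j = (\<Sum>\<alpha>\<in>alphas. \<Prod>l\<in>{1..d}. g l (j l) (tt_comp d s \<alpha> l))"
proof -
  let ?B = "idxs d n"
  have "act d n g (ttT d n s) j = (\<Sum>k\<in>?B. (\<Prod>l\<in>{1..d}. g l (j l) (k l)) *
          (\<Sum>\<alpha>\<in>alphas. \<Prod>l\<in>{1..d}. if k l = tt_comp d s \<alpha> l then 1 else 0))"
    using j by (simp add: act_def ttT_apply)
  also have "\<dots> = (\<Sum>\<alpha>\<in>alphas. \<Sum>k\<in>?B. \<Prod>l\<in>{1..d}. g l (j l) (k l) * (if k l = tt_comp d s \<alpha> l then 1 else 0))"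
    by (simp add: sum_distrib_left prod.distrib) (rule sum.swap)
  also have "\<dots> = (\<Sum>\<alpha>\<in>alphas. \<Prod>l\<in>{1..d}. \<Sum>b<n l. g l (j l) b * (if b = tt_comp d s \<alpha> l then 1 else 0))"
    by (rule sum.cong[OF refl], unfold idxs_def, rule prod_sum_PiE[symmetric]) auto
  also have "\<dots> = (\<Sum>\<alpha>\<in>alphas. \<Prod>l\<in>{1..d}. g l (j l) (tt_comp d s \<alpha> l))"
  proof (rule sum.cong[OF refl], rule prod.cong[OF refl])
    fix \<alpha> l assume a: "\<alpha> \<in> alphas" and l: "l \<in> {1..d}"
    have "(\<Sum>b<n l. g l (j l) b * (if b = tt_comp d s \<alpha> l then 1 else 0)) = (\<Sum>b<n l. if b = tt_comp d s \<alpha> l then g l (j l) b else 0)"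
      by (rule sum.cong) auto
    also have "\<dots> = g l (j l) (tt_comp d s \<alpha> l)" using tt_comp_less_n[OF a l] by (simp add: sum.delta')
    finally show "(\<Sum>b<n l. g l (j l) b * (if b = tt_comp d s \<alpha> l then 1 else 0)) = g l (j l) (tt_comp d s \<alpha> l)" .
  qed
  finally show ?thesis .
qed


definition unit_alpha :: "nat \<Rightarrow> nat \<Rightarrow> nat \<Rightarrow> nat" where
  "unit_alpha i \<gamma> = restrict (\<lambda>x. if x = i then \<gamma> else 0) {1..d-1}"

definition pair_alpha :: "nat \<Rightarrow> nat \<Rightarrow> nat \<Rightarrow> nat" where
  "pair_alpha l m = restrict (\<lambda>x. if x = l - 1 then m div s l else if x = l then m mod s l else 0) {1..d-1}"

lemma unit_alpha_in_alphas: "\<gamma> < s i \<Longrightarrow> unit_alpha i \<gamma> \<in> alphas"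
  using s_gt_0 by (auto simp: unit_alpha_def alphas_def PiE_iff)

lemma pair_alpha_in_alphas:
  assumes l: "l \<in> {1..d}" and m: "m < s (l - 1) * s l"
  shows "pair_alpha l m \<in> alphas"
  unfolding alphas_def PiE_iff
proof (intro conjI ballI)
  fix x assume x: "x \<in> {1..d-1}"
  have "s l > 0" using l s_gt_0 by simp
  then show "pair_alpha l m x \<in> {..<s x}"
    using x m s_gt_0[of x] by (auto simp: pair_alpha_def less_mult_imp_div_less)
qed (simp add: pair_alpha_def)

lemma tt_comp_pair_alpha:
  assumes l: "l \<in> {1..d}" and m: "m < s (l - 1) * s l"
  shows "tt_comp d s (pair_alpha l m) l = m"
proof -
  consider "l = 1" | "l = d" | "l \<noteq> 1" "l \<noteq> d" by blast
  then show ?thesis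
  proof cases
    case 1
    then show ?thesis using m d_ge_3 s_0 by (auto simp: tt_comp_def pair_alpha_def)
  next
    case 2
    then show ?thesis using m d_ge_3 s_d by (auto simp: tt_comp_def pair_alpha_def)
  next
    case 3
    then have "l - 1 \<in> {1..d-1}" "l \<in> {1..d-1}" "l - 1 \<noteq> l" using l by auto
    then show ?thesis using 3 by (simp add: tt_comp_def pair_alpha_def iota_def)
  qed
qed

lemma ttT_merge_unit_alpha:
  assumes i: "i \<in> {1..d-1}" and \<gamma>: "\<gamma> < s i" and \<delta>: "\<delta> < s i"
  shows "ttT d n s (merge_idx i (restrict (tt_comp d s (unit_alpha i \<gamma>)) {1..i})
      (restrict (tt_comp d s (unit_alpha i \<delta>)) {1..d})) = (if \<gamma> = \<delta> then 1 else 0)"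
    (is "ttT d n s ?J = _")
proof -
  let ?a = "unit_alpha i"
  have a: "?a \<gamma> \<in> alphas" "?a \<delta> \<in> alphas" using \<gamma> \<delta> by (simp_all add: unit_alpha_in_alphas)
  have Jl: "?J l = (if l \<le> i then tt_comp d s (?a \<gamma>) l else tt_comp d s (?a \<delta>) l)" if "l \<in> {1..d}" for l
    using that i by (auto simp: merge_idx_def)
  have Jbox: "?J \<in> idxs d n"
    unfolding idxs_def PiE_iff extensional_def mem_Collect_eq
  proof (intro conjI ballI allI impI)
    fix l assume l: "l \<in> {1..d}"
    then show "?J l \<in> {..<n l}" using Jl[OF l] tt_comp_less_n[OF a(1) l] tt_comp_less_n[OF a(2) l] by auto
  next
    fix l assume "l \<notin> {1..d}"
    then show "?J l = undefined" using i by (cases "l = 0") (auto simp: merge_idx_def)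
  qed
  show ?thesis
  proof (cases "\<gamma> = \<delta>")
    case True
    have "\<forall>l\<in>{1..d}. ?J l = tt_comp d s (?a \<gamma>) l" using Jl True by auto
    then show ?thesis using True ttT_apply_indicator[OF Jbox] a by auto
  next
    case False
    have "\<not> (\<exists>\<alpha>\<in>alphas. \<forall>l\<in>{1..d}. ?J l = tt_comp d s \<alpha> l)"
    proof
      assume "\<exists>\<alpha>\<in>alphas. \<forall>l\<in>{1..d}. ?J l = tt_comp d s \<alpha> l"
      then obtain \<alpha> where \<alpha>: "\<alpha> \<in> alphas" "\<forall>l\<in>{1..d}. ?J l = tt_comp d s \<alpha> l" by blast
      have i1: "i \<in> {1..d}" "i + 1 \<in> {1..d}" using i by auto
      have e1: "tt_comp d s \<alpha> i = tt_comp d s (?a \<gamma>) i" using \<alpha>(2) Jl[OF i1(1)] i1 by auto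
      have e2: "tt_comp d s \<alpha> (i+1) = tt_comp d s (?a \<delta>) (i+1)" using \<alpha>(2) Jl[OF i1(2)] i1 by auto
      have "?a \<gamma> i = \<gamma>" "?a \<delta> i = \<delta>" using i by (simp_all add: unit_alpha_def)
      moreover have "\<alpha> i = ?a \<gamma> i"
        using alpha_eq_tt_comp_mod[OF \<alpha>(1) i] alpha_eq_tt_comp_mod[OF a(1) i] e1 by (cases "i = 1") auto
      moreover have "\<alpha> i = ?a \<delta> i"
        using alpha_eq_tt_comp_div[OF \<alpha>(1) i] alpha_eq_tt_comp_div[OF a(2) i] e2 i
        by (cases "i = d - 1") auto
      ultimately show False using False by simp
    qed
    then show ?thesis using False ttT_apply_indicator[OF Jbox] by simp
  qed
qed

lemma ttT_upd_pair_alpha: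
  assumes l: "l \<in> {1..d}" and \<mu>: "\<mu> < s (l - 1) * s l" and \<nu>: "\<nu> < s (l - 1) * s l"
  shows "ttT d n s ((restrict (tt_comp d s (pair_alpha l \<nu>)) {1..d})(l := \<mu>)) = (if \<mu> = \<nu> then 1 else 0)"
    (is "ttT d n s ?J = _")
proof -
  let ?a = "pair_alpha l \<nu>"
  have a: "?a \<in> alphas" by (rule pair_alpha_in_alphas[OF l \<nu>])
  have Jbox: "?J \<in> idxs d n"
    unfolding idxs_def PiE_iff extensional_def mem_Collect_eq
  proof (intro conjI ballI allI impI)
    fix x assume x: "x \<in> {1..d}"
    then show "?J x \<in> {..<n x}" using tt_comp_less_n[OF a x] \<mu> s_le_n l by fastforce
  next
    fix x assume "x \<notin> {1..d}"
    then show "?J x = undefined" using l by auto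
  qed
  show ?thesis
  proof (cases "\<mu> = \<nu>")
    case True
    have "\<forall>x\<in>{1..d}. ?J x = tt_comp d s ?a x" using True tt_comp_pair_alpha[OF l \<nu>] by auto
    then show ?thesis using True ttT_apply_indicator[OF Jbox] a by auto
  next
    case False
    have "\<not> (\<exists>\<alpha>\<in>alphas. \<forall>x\<in>{1..d}. ?J x = tt_comp d s \<alpha> x)"
    proof
      assume "\<exists>\<alpha>\<in>alphas. \<forall>x\<in>{1..d}. ?J x = tt_comp d s \<alpha> x"
      then obtain \<alpha> where \<alpha>: "\<alpha> \<in> alphas" "\<forall>x\<in>{1..d}. ?J x = tt_comp d s \<alpha> x" by blast
      have "\<forall>x\<in>{1..d} - {l}. tt_comp d s \<alpha> x = tt_comp d s ?a x"
      proof
        fix x assume x: "x \<in> {1..d} - {l}"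
        then have "?J x = tt_comp d s ?a x" by auto
        moreover have "?J x = tt_comp d s \<alpha> x" using \<alpha>(2) x by blast
        ultimately show "tt_comp d s \<alpha> x = tt_comp d s ?a x" by simp
      qed
      then have "\<alpha> = ?a" using tt_comp_inj_except[OF \<alpha>(1) a] by blast
      moreover have "?J l = tt_comp d s \<alpha> l" using \<alpha>(2) l by blast
      ultimately have "?J l = \<nu>" using tt_comp_pair_alpha[OF l \<nu>] by simp
      then show False using False by simp
    qed
    then show ?thesis using False ttT_apply_indicator[OF Jbox] by simp
  qed
qed

lemma tt_rank_ttT_ge:
  assumes i: "i \<in> {1..d-1}"
  shows "s i \<le> tt_rank_i d n (ttT d n s) i"
proof -
  let ?r = "\<lambda>\<gamma>. restrict (tt_comp d s (unit_alpha i \<gamma>)) {1..i}"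
  let ?v = "\<lambda>\<gamma> c. ttT d n s (merge_idx i (?r \<gamma>) c)"
  let ?p = "\<lambda>\<delta>. restrict (tt_comp d s (unit_alpha i \<delta>)) {1..d}"
  have key: "?v \<gamma> (?p \<delta>) = (if \<gamma> = \<delta> then 1 else 0)" if "\<gamma> < s i" "\<delta> < s i" for \<gamma> \<delta>
    using ttT_merge_unit_alpha[OF i that] by simp
  have "?r \<gamma> \<in> (\<Pi>\<^sub>E k\<in>{1..i}. {..<n k})" if "\<gamma> < s i" for \<gamma>
    using tt_comp_less_n[OF unit_alpha_in_alphas[OF that]] i by auto
  then have sub: "?v ` {..<s i} \<subseteq> (\<lambda>r c. ttT d n s (merge_idx i r c)) ` (\<Pi>\<^sub>E k\<in>{1..i}. {..<n k})"
    by auto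
  show ?thesis
    unfolding tt_rank_i_def by (rule rowrank_ge_if_identity_minor[of "s i" ?v ?p, OF key sub finite_tt_rows])
qed

lemma ml_rank_ttT_ge:
  assumes l: "l \<in> {1..d}"
  shows "s (l - 1) * s l \<le> ml_rank_i d n (ttT d n s) l"
proof -
  let ?m = "s (l - 1) * s l"
  let ?v = "\<lambda>\<mu> c. ttT d n s (c(l := \<mu>))"
  let ?p = "\<lambda>\<nu>. restrict (tt_comp d s (pair_alpha l \<nu>)) {1..d}"
  have key: "?v \<mu> (?p \<nu>) = (if \<mu> = \<nu> then 1 else 0)" if "\<mu> < ?m" "\<nu> < ?m" for \<mu> \<nu>
    using ttT_upd_pair_alpha[OF l that] by simp
  have "?m \<le> n l" using s_le_n l by auto
  then have sub: "?v ` {..<?m} \<subseteq> (\<lambda>a c. ttT d n s (c(l := a))) ` {..<n l}"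
    by auto
  show ?thesis
    unfolding ml_rank_i_def by (rule rowrank_ge_if_identity_minor[of ?m ?v ?p, OF key sub]) auto
qed

lemma tt_comp_merge_idx_low:
  assumes "l \<le> i" "i < d"
  shows "tt_comp d s (merge_idx i a1 a2) l = tt_comp d s a1 l"
  using assms by (auto simp: tt_comp_def iota_def merge_idx_def)

lemma tt_comp_merge_idx_high:
  assumes "i < l" "l \<le> d" "1 \<le> i"
  shows "tt_comp d s (merge_idx i a1 a2) l = tt_comp d s (a2(i := a1 i)) l"
  using assms by (auto simp: tt_comp_def iota_def merge_idx_def)

definition ttT_right :: "(nat \<Rightarrow> nat \<Rightarrow> nat \<Rightarrow> real) \<Rightarrow> nat \<Rightarrow> nat \<Rightarrow> (nat \<Rightarrow> nat) \<Rightarrow> real" where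
  "ttT_right g i \<gamma> c = (if tail_in_box d n i c then
     (\<Sum>a\<in>Pi\<^sub>E {i+1..d-1} (\<lambda>k. {..<s k}). \<Prod>l\<in>{i+1..d}. g l (c l) (tt_comp d s (a(i := \<gamma>)) l)) else 0)"

lemma act_ttT_merge_idx:
  assumes r: "r \<in> Pi\<^sub>E {1..i} (\<lambda>k. {..<n k})" and i: "i \<in> {1..d-1}"
  shows "act d n g (ttT d n s) (merge_idx i r c) = (\<Sum>a\<in>Pi\<^sub>E {1..i} (\<lambda>k. {..<s k}).
    (\<Prod>l\<in>{1..i}. g l (r l) (tt_comp d s a l)) * ttT_right g i (a i) c)"
proof (cases "tail_in_box d n i c")
  case True
  let ?A1 = "Pi\<^sub>E {1..i} (\<lambda>k. {..<s k})" and ?A2 = "Pi\<^sub>E {i+1..d-1} (\<lambda>k. {..<s k})"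
  let ?g = "\<lambda>a l. g l (merge_idx i r c l) (tt_comp d s a l)"
  have box: "merge_idx i r c \<in> idxs d n" using True merge_idx_in_idxs_iff[OF r] i by auto
  have "act d n g (ttT d n s) (merge_idx i r c) = (\<Sum>\<alpha>\<in>alphas. \<Prod>l\<in>{1..d}. ?g \<alpha> l)"
    by (rule act_ttT_apply[OF box])
  also have "\<dots> = (\<Sum>a1\<in>?A1. \<Sum>a2\<in>?A2. \<Prod>l\<in>{1..d}. ?g (merge_idx i a1 a2) l)"
    unfolding alphas_def by (rule sum_PiE_split) (use i in auto)
  also have "\<dots> = (\<Sum>a1\<in>?A1. \<Sum>a2\<in>?A2. (\<Prod>l\<in>{1..i}. g l (r l) (tt_comp d s a1 l)) *
      (\<Prod>l\<in>{i+1..d}. g l (c l) (tt_comp d s (a2(i := a1 i)) l)))"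
  proof (intro sum.cong refl)
    fix a1 a2
    have "(\<Prod>l\<in>{1..d}. ?g (merge_idx i a1 a2) l) =
        (\<Prod>l\<in>{1..i}. ?g (merge_idx i a1 a2) l) * (\<Prod>l\<in>{i+1..d}. ?g (merge_idx i a1 a2) l)"
      by (rule prod_atLeastAtMost_split) (use i in auto)
    also have "(\<Prod>l\<in>{1..i}. ?g (merge_idx i a1 a2) l) = (\<Prod>l\<in>{1..i}. g l (r l) (tt_comp d s a1 l))"
    proof (rule prod.cong[OF refl])
      fix l assume l: "l \<in> {1..i}"
      then have "tt_comp d s (merge_idx i a1 a2) l = tt_comp d s a1 l"
        using i by (intro tt_comp_merge_idx_low) auto
      then show "?g (merge_idx i a1 a2) l = g l (r l) (tt_comp d s a1 l)"
        using l by (simp add: merge_idx_def)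
    qed
    also have "(\<Prod>l\<in>{i+1..d}. ?g (merge_idx i a1 a2) l) =
        (\<Prod>l\<in>{i+1..d}. g l (c l) (tt_comp d s (a2(i := a1 i)) l))"
    proof (rule prod.cong[OF refl])
      fix l assume l: "l \<in> {i+1..d}"
      then have "tt_comp d s (merge_idx i a1 a2) l = tt_comp d s (a2(i := a1 i)) l"
        using i by (intro tt_comp_merge_idx_high) auto
      then show "?g (merge_idx i a1 a2) l = g l (c l) (tt_comp d s (a2(i := a1 i)) l)"
        using l by (simp add: merge_idx_def)
    qed
    finally show "(\<Prod>l\<in>{1..d}. ?g (merge_idx i a1 a2) l) = (\<Prod>l\<in>{1..i}. g l (r l) (tt_comp d s a1 l)) *
        (\<Prod>l\<in>{i+1..d}. g l (c l) (tt_comp d s (a2(i := a1 i)) l))" .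
  qed
  also have "\<dots> = (\<Sum>a\<in>?A1. (\<Prod>l\<in>{1..i}. g l (r l) (tt_comp d s a l)) * ttT_right g i (a i) c)"
    using True by (simp add: ttT_right_def sum_distrib_left)
  finally show ?thesis .
next
  case False
  then have "merge_idx i r c \<notin> idxs d n" using merge_idx_in_idxs_iff[OF r] i by auto
  then show ?thesis using False by (simp add: act_def ttT_right_def)
qed

lemma tt_rank_act_ttT_le:
  assumes i: "i \<in> {1..d-1}"
  shows "tt_rank_i d n (act d n g (ttT d n s)) i \<le> s i"
proof -
  let ?W = "ttT_right g i"
  have "(\<lambda>c. act d n g (ttT d n s) (merge_idx i r c)) \<in> fv.span (?W ` {..<s i})"
    if r: "r \<in> (\<Pi>\<^sub>E k\<in>{1..i}. {..<n k})" for r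
    unfolding act_ttT_merge_idx[OF r i]
    by (rule fv_span_sumI) (use i in \<open>auto intro!: fv.span_base finite_PiE simp: PiE_iff\<close>)
  then have "tt_rank_i d n (act d n g (ttT d n s)) i \<le> card (?W ` {..<s i})"
    unfolding tt_rank_i_def rowrank_def by (intro fv.dim_le_card) auto
  also have "\<dots> \<le> s i" using card_image_le[of "{..<s i}" ?W] by simp
  finally show ?thesis .
qed

definition ttT_mode_map :: "(nat \<Rightarrow> nat \<Rightarrow> nat \<Rightarrow> real) \<Rightarrow> nat \<Rightarrow> (nat \<Rightarrow> real) \<Rightarrow> (nat \<Rightarrow> nat) \<Rightarrow> real" where
  "ttT_mode_map g l v c = (\<Sum>\<alpha>\<in>alphas. v (tt_comp d s \<alpha> l) *
     (if others_in_box d n l c then \<Prod>x\<in>{1..d}-{l}. g x (c x) (tt_comp d s \<alpha> x) else 0))"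

lemma act_ttT_upd_idx:
  assumes l: "l \<in> {1..d}" and a: "a < n l"
  shows "act d n g (ttT d n s) (c(l := a)) =
    ttT_mode_map g l (\<lambda>b. if b < s (l - 1) * s l then g l a b else 0) c"
proof (cases "others_in_box d n l c")
  case True
  then have box: "c(l := a) \<in> idxs d n" using upd_in_idxs_iff[of l d a n c, OF l a] by simp
  have "act d n g (ttT d n s) (c(l := a)) = (\<Sum>\<alpha>\<in>alphas. \<Prod>x\<in>{1..d}. g x ((c(l := a)) x) (tt_comp d s \<alpha> x))"
    by (rule act_ttT_apply[OF box])
  also have "\<dots> = (\<Sum>\<alpha>\<in>alphas. g l a (tt_comp d s \<alpha> l) * (\<Prod>x\<in>{1..d}-{l}. g x (c x) (tt_comp d s \<alpha> x)))"
  proof (rule sum.cong[OF refl])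
    fix \<alpha>
    have "(\<Prod>x\<in>{1..d}. g x ((c(l := a)) x) (tt_comp d s \<alpha> x)) =
        g l a (tt_comp d s \<alpha> l) * (\<Prod>x\<in>{1..d}-{l}. g x ((c(l := a)) x) (tt_comp d s \<alpha> x))"
      using l by (simp add: prod.remove)
    also have "(\<Prod>x\<in>{1..d}-{l}. g x ((c(l := a)) x) (tt_comp d s \<alpha> x)) =
        (\<Prod>x\<in>{1..d}-{l}. g x (c x) (tt_comp d s \<alpha> x))"
      by (rule prod.cong) auto
    finally show "(\<Prod>x\<in>{1..d}. g x ((c(l := a)) x) (tt_comp d s \<alpha> x)) =
        g l a (tt_comp d s \<alpha> l) * (\<Prod>x\<in>{1..d}-{l}. g x (c x) (tt_comp d s \<alpha> x))" .
  qed
  also have "\<dots> = ttT_mode_map g l (\<lambda>b. if b < s (l - 1) * s l then g l a b else 0) c"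
    unfolding ttT_mode_map_def using True tt_comp_less[OF _ l] by (intro sum.cong refl) auto
  finally show ?thesis .
next
  case False
  then have "c(l := a) \<notin> idxs d n" using upd_in_idxs_iff[of l d a n c, OF l a] by simp
  then show ?thesis using False by (simp add: act_def ttT_mode_map_def)
qed

lemma ml_rank_act_ttT_le_trunc:
  assumes l: "l \<in> {1..d}"
  shows "ml_rank_i d n (act d n g (ttT d n s)) l \<le>
    rowrank ((\<lambda>a b. if b < s (l - 1) * s l then g l a b else 0) ` {..<n l})"
proof -
  let ?Tr = "(\<lambda>a b. if b < s (l - 1) * s l then g l a b else 0) ` {..<n l}"
  have lin: "Vector_Spaces.linear (\<lambda>a (f::nat\<Rightarrow>real) x. a * f x) (\<lambda>a (f::(nat\<Rightarrow>nat)\<Rightarrow>real) x. a * f x)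
      (ttT_mode_map g l)"
    by (rule linear_fvI) (auto simp: ttT_mode_map_def fun_eq_iff sum.distrib sum_distrib_left algebra_simps)
  have "(\<lambda>a c. act d n g (ttT d n s) (c(l := a))) ` {..<n l} \<subseteq> ttT_mode_map g l ` ?Tr"
    using act_ttT_upd_idx[OF l] by auto
  then have sub: "(\<lambda>a c. act d n g (ttT d n s) (c(l := a))) ` {..<n l} \<subseteq> fv.span (ttT_mode_map g l ` ?Tr)"
    using fv.span_superset by blast
  show ?thesis
    unfolding ml_rank_i_def by (rule rowrank_le_if_span_image[OF lin _ sub]) simp
qed

lemma ml_rank_act_ttT_le:
  assumes "l \<in> {1..d}"
  shows "ml_rank_i d n (act d n g (ttT d n s)) l \<le> s (l - 1) * s l"
  using ml_rank_act_ttT_le_trunc[OF assms] rowrank_trunc_rows_le le_trans by blast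

end

section \<open>TT decomposition\<close>

locale tt_decomp = tt_format +
  fixes T :: tensor
  assumes T_in_tensors: "T \<in> tensors d n"
    and T_tt_rank: "\<forall>i\<in>{1..d-1}. tt_rank_i d n T i \<le> s i"
begin

definition tt_rows :: "nat \<Rightarrow> ((nat \<Rightarrow> nat) \<Rightarrow> real) set" where
  "tt_rows i = (\<lambda>r c. T (merge_idx i r c)) ` (\<Pi>\<^sub>E k\<in>{1..i}. {..<n k})"

definition row_gens :: "nat \<Rightarrow> nat \<Rightarrow> (nat \<Rightarrow> nat) \<Rightarrow> real" where
  "row_gens i = (SOME w. (\<forall>\<gamma>. w \<gamma> \<in> fv.span (tt_rows i)) \<and> tt_rows i \<subseteq> fv.span (w ` {..<s i}))"

lemma row_gens_span:
  assumes "i \<in> {1..d-1}"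
  shows "row_gens i \<gamma> \<in> fv.span (tt_rows i)" "fv.span (tt_rows i) \<subseteq> fv.span (row_gens i ` {..<s i})"
proof -
  have "rowrank (tt_rows i) \<le> s i"
    using T_tt_rank assms by (simp add: tt_rows_def tt_rank_i_def)
  then have "\<exists>w. (\<forall>\<gamma>. w \<gamma> \<in> fv.span (tt_rows i)) \<and> tt_rows i \<subseteq> fv.span (w ` {..<s i})"
    using spanning_family_exists finite_tt_rows unfolding tt_rows_def by blast
  then have w: "(\<forall>\<gamma>. row_gens i \<gamma> \<in> fv.span (tt_rows i)) \<and> tt_rows i \<subseteq> fv.span (row_gens i ` {..<s i})"
    unfolding row_gens_def by (rule someI_ex)
  then show "row_gens i \<gamma> \<in> fv.span (tt_rows i)" by blast
  show "fv.span (tt_rows i) \<subseteq> fv.span (row_gens i ` {..<s i})"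
    using fv.span_minimal[OF conjunct2[OF w] fv.subspace_span] .
qed

lemma span_tt_rows_tail_dependent:
  assumes "f \<in> fv.span (tt_rows i)" and "\<forall>x>i. c x = c' x"
  shows "f c = f c'"
proof -
  let ?S = "{f :: (nat \<Rightarrow> nat) \<Rightarrow> real. \<forall>c c'. (\<forall>x>i. c x = c' x) \<longrightarrow> f c = f c'}"
  have merge: "merge_idx i r c = merge_idx i r c'" if "\<forall>x>i. c x = c' x" for r c c'
    using that by (auto simp: merge_idx_def fun_eq_iff)
  have "tt_rows i \<subseteq> ?S"
  proof
    fix f assume "f \<in> tt_rows i"
    then obtain r where f: "f = (\<lambda>c. T (merge_idx i r c))" by (auto simp: tt_rows_def)
    have "f c = f c'" if "\<forall>x>i. c x = c' x" for c c'
      using merge[OF that, of r] f by simp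
    then show "f \<in> ?S" by blast
  qed
  moreover have "fv.subspace ?S"
    unfolding fv.subspace_def by auto metis
  ultimately have "fv.span (tt_rows i) \<subseteq> ?S" by (rule fv.span_minimal)
  then show ?thesis using assms by blast
qed

lemma slice_span_tt_rows:
  assumes i: "i \<in> {2..d-1}" and f: "f \<in> fv.span (tt_rows (i - 1))" and a: "a < n i"
  shows "(\<lambda>c. f (c(i := a))) \<in> fv.span (tt_rows i)"
proof -
  define L :: "((nat\<Rightarrow>nat)\<Rightarrow>real) \<Rightarrow> ((nat\<Rightarrow>nat)\<Rightarrow>real)" where "L = (\<lambda>f c. f (c(i := a)))"
  have lin: "Vector_Spaces.linear (\<lambda>a (f::(nat\<Rightarrow>nat)\<Rightarrow>real) x. a * f x) (\<lambda>a (f::(nat\<Rightarrow>nat)\<Rightarrow>real) x. a * f x) L"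
    by (rule linear_fvI) (simp_all add: L_def fun_eq_iff)
  have sub: "L ` tt_rows (i - 1) \<subseteq> tt_rows i"
  proof
    fix g assume "g \<in> L ` tt_rows (i - 1)"
    then obtain r' where r': "r' \<in> (\<Pi>\<^sub>E k\<in>{1..i-1}. {..<n k})" "g = L (\<lambda>c. T (merge_idx (i - 1) r' c))"
      by (auto simp: tt_rows_def)
    have rm: "r'(i := a) \<in> (\<Pi>\<^sub>E k\<in>{1..i}. {..<n k})"
      unfolding PiE_iff extensional_def mem_Collect_eq
    proof (intro conjI ballI allI impI)
      fix x assume "x \<in> {1..i}"
      then show "(r'(i := a)) x \<in> {..<n x}" using r'(1) a by (cases "x = i") (auto simp: PiE_iff)
    next
      fix x assume "x \<notin> {1..i}"
      then show "(r'(i := a)) x = undefined" using r'(1) i by (auto simp: PiE_def extensional_def)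
    qed
    have "g = (\<lambda>c. T (merge_idx i (r'(i := a)) c))"
    proof
      fix c
      have "merge_idx (i - 1) r' (c(i := a)) = merge_idx i (r'(i := a)) c"
        using i by (auto simp: merge_idx_def fun_eq_iff)
      then show "g c = T (merge_idx i (r'(i := a)) c)" using r'(2) by (simp add: L_def)
    qed
    then show "g \<in> tt_rows i" using rm by (auto simp: tt_rows_def)
  qed
  have "L f \<in> L ` fv.span (tt_rows (i - 1))" using f by blast
  also have "\<dots> = fv.span (L ` tt_rows (i - 1))" using fvp.linear_span_image[OF lin] by simp
  also have "\<dots> \<subseteq> fv.span (tt_rows i)" by (rule fv.span_mono[OF sub])
  finally show ?thesis by (simp add: L_def)
qed

text \<open>The TT core \<open>G\<^sub>l(\<beta>, a, \<gamma>)\<close> of \<open>T\<close>; as \<open>s\<^sub>0 = s\<^sub>d = 1\<close>, the first core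
  ignores \<open>\<beta>\<close> and the last one ignores \<open>\<gamma>\<close>.\<close>

definition core :: "nat \<Rightarrow> nat \<Rightarrow> nat \<Rightarrow> nat \<Rightarrow> real" where
  "core l \<beta> a \<gamma> =
    (if l = 1 then span_coeffs (row_gens 1) (s 1) (\<lambda>c. T (merge_idx 1 (restrict (\<lambda>_. a) {1}) c)) \<gamma>
     else if l = d then row_gens (d - 1) \<beta> ((\<lambda>_. undefined)(d := a))
     else span_coeffs (row_gens l) (s l) (\<lambda>c. row_gens (l - 1) \<beta> (c(l := a))) \<gamma>)"

lemma core_first:
  assumes a: "a < n 1"
  shows "T (merge_idx 1 (restrict (\<lambda>_. a) {1}) c) = (\<Sum>\<gamma><s 1. core 1 \<beta> a \<gamma> * row_gens 1 \<gamma> c)"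
proof -
  have one: "1 \<in> {1..d-1}" using d_ge_3 by auto
  have "(\<lambda>c. T (merge_idx 1 (restrict (\<lambda>_. a) {1}) c)) \<in> tt_rows 1"
    unfolding tt_rows_def by (rule image_eqI[where x = "restrict (\<lambda>_. a) {1}"]) (use a in auto)
  then have "(\<lambda>c. T (merge_idx 1 (restrict (\<lambda>_. a) {1}) c)) \<in> fv.span (row_gens 1 ` {..<s 1})"
    using row_gens_span(2)[OF one] fv.span_base by blast
  from span_coeffs_expand[OF this, of c] show ?thesis by (simp add: core_def)
qed

lemma core_step:
  assumes l: "l \<in> {2..d-1}" and a: "a < n l"
  shows "row_gens (l - 1) \<beta> (c(l := a)) = (\<Sum>\<gamma><s l. core l \<beta> a \<gamma> * row_gens l \<gamma> c)"
proof -
  have l1: "l - 1 \<in> {1..d-1}" "l \<in> {1..d-1}" using l by auto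
  have "(\<lambda>c. row_gens (l - 1) \<beta> (c(l := a))) \<in> fv.span (row_gens l ` {..<s l})"
    using slice_span_tt_rows[OF l row_gens_span(1)[OF l1(1)] a] row_gens_span(2)[OF l1(2)] by blast
  moreover have "l \<noteq> 1" "l \<noteq> d" using l by auto
  ultimately show ?thesis using span_coeffs_expand by (simp add: core_def)
qed

lemma core_last:
  assumes j: "j \<in> idxs d n"
  shows "row_gens (d - 1) \<beta> j = core d \<beta> (j d) \<gamma>"
proof -
  have "d - 1 \<in> {1..d-1}" using d_ge_3 by auto
  moreover have "\<forall>x>d - 1. j x = ((\<lambda>_. undefined)(d := j d)) x"
    using j d_ge_3 by (auto simp: idxs_def PiE_def extensional_def)
  ultimately have "row_gens (d - 1) \<beta> j = row_gens (d - 1) \<beta> ((\<lambda>_. undefined)(d := j d))"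
    using span_tt_rows_tail_dependent[OF row_gens_span(1)] by blast
  then show ?thesis using d_ge_3 by (simp add: core_def)
qed

definition cores_prod :: "nat \<Rightarrow> (nat \<Rightarrow> nat) \<Rightarrow> (nat \<Rightarrow> nat) \<Rightarrow> real" where
  "cores_prod k \<alpha> j = (\<Prod>l\<in>{1..k}. core l (\<alpha> (l - 1)) (j l) (\<alpha> l))"

lemma tt_expansion_first:
  assumes j: "j \<in> idxs d n"
  shows "T j = (\<Sum>\<alpha>\<in>Pi\<^sub>E {1..1} (\<lambda>x. {..<s x}). cores_prod 1 \<alpha> j * row_gens 1 (\<alpha> 1) j)"
proof -
  have j1: "j 1 < n 1" using idxs_less[OF j, of 1] d_ge_3 by auto
  have jm: "merge_idx 1 (restrict (\<lambda>_. j 1) {1}) j = j"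
    using j by (auto simp: merge_idx_def fun_eq_iff idxs_def PiE_def extensional_def)
  have "T j = (\<Sum>\<gamma><s 1. core 1 0 (j 1) \<gamma> * row_gens 1 \<gamma> j)"
    using core_first[OF j1, of j 0] jm by simp
  also have "\<dots> = (\<Sum>b\<in>{..<s 1}. \<Sum>\<alpha>\<in>Pi\<^sub>E ({1..1} - {1}) (\<lambda>x. {..<s x}).
      cores_prod 1 (\<alpha>(1 := b)) j * row_gens 1 ((\<alpha>(1 := b)) 1) j)"
    by (simp add: cores_prod_def core_def)
  also have "\<dots> = (\<Sum>\<alpha>\<in>Pi\<^sub>E {1..1} (\<lambda>x. {..<s x}). cores_prod 1 \<alpha> j * row_gens 1 (\<alpha> 1) j)"
    by (rule sum_PiE_remove[symmetric]) auto
  finally show ?thesis .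
qed

lemma tt_expansion_Suc:
  assumes k: "1 \<le> k" "Suc k \<le> d - 1" and j: "j \<in> idxs d n"
  shows "(\<Sum>\<alpha>\<in>Pi\<^sub>E {1..k} (\<lambda>x. {..<s x}). cores_prod k \<alpha> j * row_gens k (\<alpha> k) j) =
    (\<Sum>\<alpha>\<in>Pi\<^sub>E {1..Suc k} (\<lambda>x. {..<s x}). cores_prod (Suc k) \<alpha> j * row_gens (Suc k) (\<alpha> (Suc k)) j)"
proof -
  let ?A = "Pi\<^sub>E {1..k} (\<lambda>x. {..<s x})" and ?C = "core (Suc k)"
  have sk: "Suc k \<in> {2..d-1}" using k by auto
  have jsk: "j (Suc k) < n (Suc k)" using idxs_less[OF j, of "Suc k"] k by auto
  have step: "row_gens k \<beta> j = (\<Sum>\<gamma><s (Suc k). ?C \<beta> (j (Suc k)) \<gamma> * row_gens (Suc k) \<gamma> j)" for \<beta>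
    using core_step[OF sk jsk, of \<beta> j] by simp
  have "(\<Sum>\<alpha>\<in>?A. cores_prod k \<alpha> j * row_gens k (\<alpha> k) j) =
      (\<Sum>\<gamma><s (Suc k). \<Sum>\<alpha>\<in>?A. cores_prod k \<alpha> j * ?C (\<alpha> k) (j (Suc k)) \<gamma> * row_gens (Suc k) \<gamma> j)"
    by (simp add: step sum_distrib_left mult.assoc) (rule sum.swap)
  also have "\<dots> = (\<Sum>\<gamma>\<in>{..<s (Suc k)}. \<Sum>\<alpha>\<in>Pi\<^sub>E ({1..Suc k} - {Suc k}) (\<lambda>x. {..<s x}).
      cores_prod (Suc k) (\<alpha>(Suc k := \<gamma>)) j * row_gens (Suc k) ((\<alpha>(Suc k := \<gamma>)) (Suc k)) j)"
  proof (intro sum.cong refl)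
    show "?A = Pi\<^sub>E ({1..Suc k} - {Suc k}) (\<lambda>x. {..<s x})"
      by (simp add: atLeastAtMostSuc_conv k(1))
  next
    fix \<gamma> \<alpha>
    have "cores_prod (Suc k) (\<alpha>(Suc k := \<gamma>)) j =
        (\<Prod>l\<in>{1..k}. core l ((\<alpha>(Suc k := \<gamma>)) (l - 1)) (j l) ((\<alpha>(Suc k := \<gamma>)) l)) *
        ?C (\<alpha> k) (j (Suc k)) \<gamma>"
      unfolding cores_prod_def using k(1) by (simp add: prod.cl_ivl_Suc)
    also have "(\<Prod>l\<in>{1..k}. core l ((\<alpha>(Suc k := \<gamma>)) (l - 1)) (j l) ((\<alpha>(Suc k := \<gamma>)) l)) = cores_prod k \<alpha> j"
      unfolding cores_prod_def by (rule prod.cong) auto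
    finally have "cores_prod (Suc k) (\<alpha>(Suc k := \<gamma>)) j = cores_prod k \<alpha> j * ?C (\<alpha> k) (j (Suc k)) \<gamma>" .
    then show "cores_prod k \<alpha> j * ?C (\<alpha> k) (j (Suc k)) \<gamma> * row_gens (Suc k) \<gamma> j =
        cores_prod (Suc k) (\<alpha>(Suc k := \<gamma>)) j * row_gens (Suc k) ((\<alpha>(Suc k := \<gamma>)) (Suc k)) j"
      by simp
  qed
  also have "\<dots> = (\<Sum>\<alpha>\<in>Pi\<^sub>E {1..Suc k} (\<lambda>x. {..<s x}). cores_prod (Suc k) \<alpha> j * row_gens (Suc k) (\<alpha> (Suc k)) j)"
    by (rule sum_PiE_remove[symmetric]) auto
  finally show ?thesis .
qed

lemma tt_expansion_partial:
  assumes "1 \<le> k" "k \<le> d - 1" and j: "j \<in> idxs d n"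
  shows "T j = (\<Sum>\<alpha>\<in>Pi\<^sub>E {1..k} (\<lambda>x. {..<s x}). cores_prod k \<alpha> j * row_gens k (\<alpha> k) j)"
  using assms(1,2)
proof (induction k rule: nat_induct_at_least)
  case base
  show ?case by (rule tt_expansion_first[OF j])
next
  case (Suc k)
  then show ?case using tt_expansion_Suc[OF Suc.hyps(1) Suc.prems j] by simp
qed

lemma tt_expansion:
  assumes j: "j \<in> idxs d n"
  shows "T j = (\<Sum>\<alpha>\<in>alphas. \<Prod>l\<in>{1..d}. core l (\<alpha> (l - 1)) (j l) (\<alpha> l))"
proof -
  have dd: "1 \<le> d - 1" "d = Suc (d - 1)" using d_ge_3 by auto
  have "T j = (\<Sum>\<alpha>\<in>alphas. cores_prod (d - 1) \<alpha> j * row_gens (d - 1) (\<alpha> (d - 1)) j)"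
    using tt_expansion_partial[OF dd(1) order_refl j] by (simp add: alphas_def)
  also have "\<dots> = (\<Sum>\<alpha>\<in>alphas. \<Prod>l\<in>{1..d}. core l (\<alpha> (l - 1)) (j l) (\<alpha> l))"
  proof (rule sum.cong[OF refl])
    fix \<alpha>
    have "(\<Prod>l\<in>{1..d}. core l (\<alpha> (l - 1)) (j l) (\<alpha> l)) =
        cores_prod (d - 1) \<alpha> j * core d (\<alpha> (d - 1)) (j d) (\<alpha> d)"
      unfolding cores_prod_def by (subst dd(2), subst prod.cl_ivl_Suc) (use dd in simp)
    then show "cores_prod (d - 1) \<alpha> j * row_gens (d - 1) (\<alpha> (d - 1)) j =
        (\<Prod>l\<in>{1..d}. core l (\<alpha> (l - 1)) (j l) (\<alpha> l))"
      using core_last[OF j, of "\<alpha> (d - 1)" "\<alpha> d"] by simp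
  qed
  finally show ?thesis .
qed

text \<open>Column \<open>\<iota>\<^sub>l(\<beta>, \<gamma>)\<close> of \<open>h\<^sub>l\<close> is the core slice \<open>G\<^sub>l(\<beta>, -, \<gamma>)\<close>.\<close>

definition tt_factors :: "nat \<Rightarrow> nat \<Rightarrow> nat \<Rightarrow> real" where
  "tt_factors l a b = (if b < s (l - 1) * s l then core l (b div s l) a (b mod s l) else 0)"

lemma tt_factors_tt_comp:
  assumes \<alpha>: "\<alpha> \<in> alphas" and l: "l \<in> {1..d}"
  shows "tt_factors l a (tt_comp d s \<alpha> l) = core l (\<alpha> (l - 1)) a (\<alpha> l)"
proof -
  have lt: "tt_comp d s \<alpha> l < s (l - 1) * s l" by (rule tt_comp_less[OF \<alpha> l])
  consider "l = 1" | "l = d" | "l \<noteq> 1" "l \<noteq> d" by blast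
  then show ?thesis
  proof cases
    case 1
    have "1 \<in> {1..d-1}" using d_ge_3 by auto
    then have "\<alpha> 1 < s 1" using alphas_less[OF \<alpha>] by blast
    then show ?thesis using lt 1 d_ge_3 by (simp add: tt_factors_def core_def tt_comp_def)
  next
    case 2
    then show ?thesis using lt d_ge_3 s_d by (simp add: tt_factors_def core_def tt_comp_def)
  next
    case 3
    then have "l \<in> {1..d-1}" using l by auto
    then have "\<alpha> l < s l" "s l > 0" using alphas_less[OF \<alpha>] s_gt_0 by auto
    then show ?thesis using lt 3 by (simp add: tt_factors_def core_def tt_comp_def iota_def)
  qed
qed

theorem tt_decomposition: "T = act d n tt_factors (ttT d n s)"
proof
  fix j
  show "T j = act d n tt_factors (ttT d n s) j"
  proof (cases "j \<in> idxs d n")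
    case True
    have "act d n tt_factors (ttT d n s) j = (\<Sum>\<alpha>\<in>alphas. \<Prod>l\<in>{1..d}. tt_factors l (j l) (tt_comp d s \<alpha> l))"
      by (rule act_ttT_apply[OF True])
    also have "\<dots> = (\<Sum>\<alpha>\<in>alphas. \<Prod>l\<in>{1..d}. core l (\<alpha> (l - 1)) (j l) (\<alpha> l))"
      by (intro sum.cong prod.cong refl) (simp add: tt_factors_tt_comp)
    finally show ?thesis using tt_expansion[OF True] by simp
  next
    case False
    then show ?thesis using T_in_tensors by (simp add: act_def tensors_def)
  qed
qed

end

section \<open>The orbit of \<open>ttT\<close>\<close>

context tt_format
begin

lemma act_ttT_cong:
  assumes "\<forall>l\<in>{1..d}. \<forall>a<n l. \<forall>b<s (l - 1) * s l. g l a b = h l a b"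
  shows "act d n g (ttT d n s) = act d n h (ttT d n s)"
proof
  fix j
  show "act d n g (ttT d n s) j = act d n h (ttT d n s) j"
  proof (cases "j \<in> idxs d n")
    case True
    have "(\<Sum>\<alpha>\<in>alphas. \<Prod>l\<in>{1..d}. g l (j l) (tt_comp d s \<alpha> l)) =
        (\<Sum>\<alpha>\<in>alphas. \<Prod>l\<in>{1..d}. h l (j l) (tt_comp d s \<alpha> l))"
      using assms idxs_less[OF True] tt_comp_less by (intro sum.cong prod.cong refl) blast
    then show ?thesis using act_ttT_apply[OF True] by simp
  next
    case False
    then show ?thesis by (simp add: act_def)
  qed
qed

lemma act_ttT_in_orbit:
  assumes H: "\<forall>l\<in>{1..d}. s (l - 1) * s l \<le> ml_rank_i d n (act d n h (ttT d n s)) l"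
  shows "act d n h (ttT d n s) \<in> orbit d n (ttT d n s)"
proof -
  have "\<exists>g\<in>GLn (n l). \<forall>a<n l. \<forall>b<s (l - 1) * s l. g a b = h l a b" if l: "l \<in> {1..d}" for l
  proof (rule extend_to_GLn)
    show "s (l - 1) * s l \<le> n l" using s_le_n l by blast
    show "inj_mat (h l) (n l) (s (l - 1) * s l)"
      using le_trans[OF H[rule_format, OF l] ml_rank_act_ttT_le_trunc[OF l]]
      by (rule inj_mat_if_rowrank_trunc_rows)
  qed
  then obtain G where G: "\<And>l. l \<in> {1..d} \<Longrightarrow> G l \<in> GLn (n l) \<and> (\<forall>a<n l. \<forall>b<s (l - 1) * s l. G l a b = h l a b)"
    by metis
  then have "G \<in> Grp d n" and "act d n G (ttT d n s) = act d n h (ttT d n s)"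
    by (simp_all add: Grp_def act_ttT_cong)
  then show ?thesis unfolding orbit_def by (metis image_eqI)
qed

lemma ttT_in_ttrank_fibre: "ttT d n s \<in> ttrank_fibre d n s"
  unfolding ttrank_fibre_def
proof (intro CollectI conjI ballI)
  show "ttT d n s \<in> tensors d n" by (rule ttT_in_tensors)
  fix i assume i: "i \<in> {1..d-1}"
  have "tt_rank_i d n (ttT d n s) i \<le> s i"
    using tt_rank_act_ttT_le[OF i, of "\<lambda>x a b. if a = b then 1 else 0"] act_id[OF ttT_in_tensors] by simp
  then show "tt_rank_i d n (ttT d n s) i = s i" using tt_rank_ttT_ge[OF i] by simp
qed

lemma orbit_subset_ttrank_fibre: "orbit d n (ttT d n s) \<subseteq> ttrank_fibre d n s"
  unfolding orbit_def using act_ttrank_fibre ttT_in_ttrank_fibre by blast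

lemma ml_rank_orbit:
  assumes T: "T \<in> orbit d n (ttT d n s)" and l: "l \<in> {1..d}"
  shows "ml_rank_i d n T l = s (l - 1) * s l"
proof -
  obtain g where g: "g \<in> Grp d n" "T = act d n g (ttT d n s)" using T by (auto simp: orbit_def)
  then show ?thesis
    using ml_rank_act_ttT_le[OF l, of g] ml_rank_ttT_ge[OF l] ml_rank_act_eq[OF g(1) ttT_in_tensors l]
    by simp
qed

lemma tt_rank_le_imp_act_ttT:
  assumes "T \<in> tensors d n" "\<forall>i\<in>{1..d-1}. tt_rank_i d n T i \<le> s i"
  shows "\<exists>h. T = act d n h (ttT d n s)"
proof -
  interpret tt_decomp d n s T
    by (intro tt_decomp.intro tt_format_axioms tt_decomp_axioms.intro assms)
  show ?thesis using tt_decomposition by blast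
qed

lemma orbit_eq_ml_rank_ge:
  "orbit d n (ttT d n s) = {T \<in> tensors d n. (\<forall>i\<in>{1..d-1}. tt_rank_i d n T i \<le> s i) \<and>
      (\<forall>l\<in>{1..d}. s (l - 1) * s l \<le> ml_rank_i d n T l)}"
proof (intro equalityI subsetI)
  fix T assume "T \<in> orbit d n (ttT d n s)"
  then show "T \<in> {T \<in> tensors d n. (\<forall>i\<in>{1..d-1}. tt_rank_i d n T i \<le> s i) \<and>
      (\<forall>l\<in>{1..d}. s (l - 1) * s l \<le> ml_rank_i d n T l)}"
    using orbit_subset_ttrank_fibre ml_rank_orbit by (fastforce simp: ttrank_fibre_def)
next
  fix T assume "T \<in> {T \<in> tensors d n. (\<forall>i\<in>{1..d-1}. tt_rank_i d n T i \<le> s i) \<and>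
      (\<forall>l\<in>{1..d}. s (l - 1) * s l \<le> ml_rank_i d n T l)}"
  then show "T \<in> orbit d n (ttT d n s)"
    using tt_rank_le_imp_act_ttT act_ttT_in_orbit by blast
qed

lemma orbit_eq_fibre_ml_rank_ge:
  "orbit d n (ttT d n s) = {T \<in> ttrank_fibre d n s. \<forall>l\<in>{1..d}. s (l - 1) * s l \<le> ml_rank_i d n T l}"
proof (intro equalityI subsetI)
  fix T assume T: "T \<in> orbit d n (ttT d n s)"
  then have "T \<in> ttrank_fibre d n s" using orbit_subset_ttrank_fibre by blast
  moreover have "\<forall>l\<in>{1..d}. s (l - 1) * s l \<le> ml_rank_i d n T l" using ml_rank_orbit[OF T] by simp
  ultimately show "T \<in> {T \<in> ttrank_fibre d n s. \<forall>l\<in>{1..d}. s (l - 1) * s l \<le> ml_rank_i d n T l}"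
    by blast
next
  fix T assume "T \<in> {T \<in> ttrank_fibre d n s. \<forall>l\<in>{1..d}. s (l - 1) * s l \<le> ml_rank_i d n T l}"
  then show "T \<in> orbit d n (ttT d n s)"
    unfolding orbit_eq_ml_rank_ge ttrank_fibre_def by auto
qed

lemma orbit_eq_ml_rank_eq:
  "orbit d n (ttT d n s) = {T \<in> ttrank_fibre d n s. \<forall>l\<in>{1..d}. ml_rank_i d n T l = s (l - 1) * s l}"
proof (intro equalityI subsetI)
  fix T assume "T \<in> orbit d n (ttT d n s)"
  then show "T \<in> {T \<in> ttrank_fibre d n s. \<forall>l\<in>{1..d}. ml_rank_i d n T l = s (l - 1) * s l}"
    using orbit_subset_ttrank_fibre ml_rank_orbit by blast
next
  fix T assume "T \<in> {T \<in> ttrank_fibre d n s. \<forall>l\<in>{1..d}. ml_rank_i d n T l = s (l - 1) * s l}"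
  then show "T \<in> orbit d n (ttT d n s)"
    unfolding orbit_eq_ml_rank_ge ttrank_fibre_def by auto
qed

lemma orbit_openin: "openin (top_of_set (ttrank_fibre d n s)) (orbit d n (ttT d n s))"
  unfolding openin_open
proof (intro exI conjI)
  let ?U = "\<Inter>l\<in>{1..d}. {T. s (l - 1) * s l \<le> rowrank ((\<lambda>a c. T (c(l := a))) ` {..<n l})}"
  show "open ?U" by (intro open_INT finite_atLeastAtMost ballI open_rowrank_ge finite_lessThan)
  show "orbit d n (ttT d n s) = ttrank_fibre d n s \<inter> ?U"
    unfolding orbit_eq_fibre_ml_rank_ge ml_rank_i_def by auto
qed

lemma ttrank_fibre_subset_closure_orbit: "ttrank_fibre d n s \<subseteq> closure (orbit d n (ttT d n s))"
proof
  fix T assume T: "T \<in> ttrank_fibre d n s"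
  have "T \<in> tensors d n" "\<forall>i\<in>{1..d-1}. tt_rank_i d n T i \<le> s i"
    using T by (auto simp: ttrank_fibre_def)
  then obtain h where h: "T = act d n h (ttT d n s)"
    using tt_rank_le_imp_act_ttT by blast
  define gt where "gt = (\<lambda>t::real. \<lambda>l a b. h l a b + t * (if a = b then 1 else 0))"
  \<comment> \<open>\<open>h\<^sub>l + t I\<close> is singular only if \<open>-t\<close> is an eigenvalue of \<open>h\<^sub>l\<close>.\<close>
  define bad where "bad = (\<Union>l\<in>{1..d}. {t. \<not> inj_mat (gt t l) (n l) (n l)})"
  have "finite bad"
    unfolding bad_def gt_def by (intro finite_UN_I finite_atLeastAtMost finite_singular_shifts)
  then have ev: "eventually (\<lambda>t. t \<notin> bad) (at 0)"
    using islimpt_finite islimpt_iff_eventually by blast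
  have "act d n (gt t) (ttT d n s) \<in> orbit d n (ttT d n s)" if "t \<notin> bad" for t
  proof -
    have "gt t \<in> Grp d n"
      using that inj_mat_GLn by (auto simp: Grp_def bad_def)
    then show ?thesis by (auto simp: orbit_def)
  qed
  then have ev_orbit: "eventually (\<lambda>t. act d n (gt t) (ttT d n s) \<in> closure (orbit d n (ttT d n s))) (at 0)"
    using ev closure_subset by (auto elim!: eventually_mono)
  have "continuous_on UNIV (\<lambda>t. act d n (gt t) (ttT d n s))"
  proof (rule continuous_on_coordinatewise_then_product)
    fix j
    show "continuous_on UNIV (\<lambda>t. act d n (gt t) (ttT d n s) j)"
      unfolding act_def gt_def by (cases "j \<in> idxs d n") (simp_all add: continuous_intros)
  qed
  moreover have "act d n (gt 0) (ttT d n s) = T" using h by (simp add: gt_def)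
  ultimately have "((\<lambda>t. act d n (gt t) (ttT d n s)) \<longlongrightarrow> T) (at 0)"
    by (metis continuous_on_eq_continuous_at isCont_def open_UNIV UNIV_I)
  then show "T \<in> closure (orbit d n (ttT d n s))"
    using Lim_in_closed_set[OF closed_closure ev_orbit] by simp
qed

lemma orbit_zopenin: "zopenin d n (zclosure d n (ttrank_fibre d n s)) (orbit d n (ttT d n s))"
  unfolding zopenin_def
proof (intro exI conjI)
  let ?X = "{T \<in> tensors d n. \<forall>i\<in>{1..d-1}. tt_rank_i d n T i < s i + 1}"
  let ?Z = "{T \<in> tensors d n. \<exists>l\<in>{1..d}. ml_rank_i d n T l < s (l - 1) * s l}"
  show "zclosed d n ?Z"
    unfolding ml_rank_i_def by (intro zclosed_Bex finite_atLeastAtMost zclosed_rowrank_less) simp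
  have "zclosed d n ?X"
    unfolding tt_rank_i_def by (intro zclosed_Ball zclosed_rowrank_less) (auto intro: finite_PiE)
  moreover have "ttrank_fibre d n s \<subseteq> ?X" by (auto simp: ttrank_fibre_def)
  ultimately have closure_X: "zclosure d n (ttrank_fibre d n s) \<subseteq> ?X"
    unfolding zclosure_def by blast
  have fibre_closure: "ttrank_fibre d n s \<subseteq> zclosure d n (ttrank_fibre d n s)"
    unfolding zclosure_def by blast
  show "orbit d n (ttT d n s) = zclosure d n (ttrank_fibre d n s) - ?Z"
  proof (intro equalityI subsetI)
    fix T assume T: "T \<in> orbit d n (ttT d n s)"
    then have "T \<in> zclosure d n (ttrank_fibre d n s)"
      using orbit_subset_ttrank_fibre fibre_closure by blast
    moreover have "T \<notin> ?Z" using ml_rank_orbit[OF T] by auto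
    ultimately show "T \<in> zclosure d n (ttrank_fibre d n s) - ?Z" by blast
  next
    fix T assume T: "T \<in> zclosure d n (ttrank_fibre d n s) - ?Z"
    then have "T \<in> ?X" using closure_X by blast
    then show "T \<in> orbit d n (ttT d n s)"
      using T unfolding orbit_eq_ml_rank_ge by (auto simp: not_less)
  qed
qed

end

theorem mainTheorem11:
  fixes d :: nat and n s :: "nat \<Rightarrow> nat"
  assumes hd: "d \<ge> 3"
    and hn: "\<forall>i\<in>{1..d}. n i \<ge> 2"
    and hs: "\<forall>i\<in>{1..d-1}. s i > 0"
    and hs0: "s 0 = 1" and hsd: "s d = 1"
    and hsn: "\<forall>i\<in>{1..d}. s (i - 1) * s i \<le> n i"
  shows "(\<forall>g\<in>Grp d n. \<forall>T\<in>ttrank_fibre d n s. act d n g T \<in> ttrank_fibre d n s)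
    \<and> orbit d n (ttT d n s) \<subseteq> ttrank_fibre d n s
    \<and> openin (top_of_set (ttrank_fibre d n s)) (orbit d n (ttT d n s))
    \<and> ttrank_fibre d n s \<subseteq> closure (orbit d n (ttT d n s))
    \<and> zopenin d n (zclosure d n (ttrank_fibre d n s)) (orbit d n (ttT d n s))
    \<and> orbit d n (ttT d n s) =
        {T \<in> ttrank_fibre d n s. \<forall>i\<in>{1..d}. ml_rank_i d n T i = s (i - 1) * s i}"
proof -
  interpret tt_format d n s
    using hd hs hs0 hsd hsn by unfold_locales
  show ?thesis
    using act_ttrank_fibre orbit_subset_ttrank_fibre orbit_openin ttrank_fibre_subset_closure_orbit
      orbit_zopenin orbit_eq_ml_rank_eq by blast
qed

end
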